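(* Let $C>1$ and assume there are $a_1\ge1$, $a_2>0$ with, for all $\xi\in\Gamma_0$, $$\sum_{x\in\xi}\int_{\Gamma_0}|K_0^{-1}d(x,\cdot\cup\xi\setminus x)|(\eta)C^{|\eta|}d\lambda(\eta)\le a_1D(\xi),\quad \sum_{x\in\xi}\int_{\Gamma_0}|K_0^{-1}b(x,\cdot\cup\xi\setminus x)|(\eta)C^{|\eta|}d\lambda(\eta)\le a_2D(\xi).$$ Define, for $G\in\mathcal D$, $$(L_1G)(\eta):=-\sum_{\xi\subsetneq\eta}G(\xi)\sum_{x\in\xi}(K_0^{-1}d(x,\cdot\cup\xi\setminus x))(\eta\setminus\xi)+\sum_{\xi\subset\eta}\int_{\mathbb{R}^d}G(\xi\cup x)(K_0^{-1}b(x,\cdot\cup\xi))(\eta\setminus\xi)\,dx .$$ Then $L_1:\mathcal D\to\mathcal L_C$ is well defined, and with $L_0G=-DG$, $$\|L_1(z\mathbf 1-L_0)^{-1}\|\le a_1-1+\frac{a_2}{C}\quad\text{for all } \operatorname{Re}z>0,\qquad \|L_1G\|_C\le\Bigl(a_1-1+\frac{a_2}{C}\Bigr)\|L_0G\|_C\quad\text{for all }G\in\mathcal D.$$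
   Context: $\Gamma_0$: space of finite subsets of $\mathbb{R}^d$, Lebesgue–Poisson measure $\lambda=\sum_n\frac1{n!}m^{(n)}$. $(K_0^{-1}f(x,\cdot\cup\xi))(\eta):=\sum_{\zeta\subset\eta}(-1)^{|\eta\setminus\zeta|}f(x,\zeta\cup\xi)$. $d,b\ge0$ finite measurable rates on $\mathbb{R}^d\times\Gamma_0$; $D(\eta)=\sum_{x\in\eta}d(x,\eta\setminus x)$; $\mathcal L_C=L^1(\Gamma_0,C^{|\eta|}d\lambda)$ with norm $\|\cdot\|_C$; $\mathcal D=\{G\in\mathcal L_C:DG\in\mathcal L_C\}$; $(L_0G)(\eta)=-D(\eta)G(\eta)$ on $\mathcal D$. *)

theory Defs
  imports "HOL-Analysis.Analysis"
begin

text \<open>Points of R^d are modelled by an arbitrary Euclidean space 'a.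
Configurations in Gamma_0 are finite sets of type 'a set; functions on Gamma_0
are functions on 'a set (only their values on finite sets matter).\<close>

definition cfg :: "nat \<Rightarrow> (nat \<Rightarrow> 'a) \<Rightarrow> 'a set" where
  "cfg n x = x ` {..<n}"

text \<open>Lebesgue--Poisson integral of a nonnegative function:
  lambda = sum_n 1/n! m^(n), i.e. int f d lambda = sum_n 1/n! int_{(R^d)^n} f({x_1..x_n}) dx.\<close>
definition LP_nn :: "('a::euclidean_space set \<Rightarrow> ennreal) \<Rightarrow> ennreal" where
  "LP_nn f = (\<Sum>n. ennreal (1 / fact n) *
      (\<integral>\<^sup>+ x. f (cfg n x) \<partial>(PiM {..<n} (\<lambda>_. (lborel :: 'a measure)))))"

definition LP_ae :: "('a::euclidean_space set \<Rightarrow> bool) \<Rightarrow> bool" where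
  "LP_ae P \<longleftrightarrow> LP_nn (\<lambda>\<eta>. if P \<eta> then 0 else 1) = 0"

definition LP_meas :: "('a::euclidean_space set \<Rightarrow> complex) \<Rightarrow> bool" where
  "LP_meas G \<longleftrightarrow> (\<forall>n. (\<lambda>x. G (cfg n x)) \<in> borel_measurable (PiM {..<n} (\<lambda>_. (lborel :: 'a measure))))"

definition rate_meas :: "('a::euclidean_space \<Rightarrow> 'a set \<Rightarrow> real) \<Rightarrow> bool" where
  "rate_meas r \<longleftrightarrow> (\<forall>n. (\<lambda>(x, y). r x (cfg n y))
      \<in> borel_measurable ((lborel :: 'a measure) \<Otimes>\<^sub>M PiM {..<n} (\<lambda>_. (lborel :: 'a measure))))"

definition normC :: "real \<Rightarrow> ('a::euclidean_space set \<Rightarrow> complex) \<Rightarrow> ennreal" where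
  "normC C G = LP_nn (\<lambda>\<eta>. ennreal (cmod (G \<eta>) * C ^ card \<eta>))"

definition LC :: "real \<Rightarrow> ('a::euclidean_space set \<Rightarrow> complex) set" where
  "LC C = {G. LP_meas G \<and> normC C G < \<infinity>}"

definition Kinv :: "('a set \<Rightarrow> real) \<Rightarrow> 'a set \<Rightarrow> real" where
  "Kinv f \<eta> = (\<Sum>\<zeta>\<in>Pow \<eta>. (-1) ^ card (\<eta> - \<zeta>) * f \<zeta>)"

definition Dtot :: "('a \<Rightarrow> 'a set \<Rightarrow> real) \<Rightarrow> 'a set \<Rightarrow> real" where
  "Dtot d \<eta> = (\<Sum>x\<in>\<eta>. d x (\<eta> - {x}))"

definition DomD :: "real \<Rightarrow> ('a::euclidean_space \<Rightarrow> 'a set \<Rightarrow> real) \<Rightarrow> ('a set \<Rightarrow> complex) set" where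
  "DomD C d = {G. G \<in> LC C \<and> (\<lambda>\<eta>. of_real (Dtot d \<eta>) * G \<eta>) \<in> LC C}"

definition L0 :: "('a \<Rightarrow> 'a set \<Rightarrow> real) \<Rightarrow> ('a set \<Rightarrow> complex) \<Rightarrow> 'a set \<Rightarrow> complex" where
  "L0 d G \<eta> = - (of_real (Dtot d \<eta>) * G \<eta>)"

definition birth_integrand ::
  "('a \<Rightarrow> 'a set \<Rightarrow> real) \<Rightarrow> ('a set \<Rightarrow> complex) \<Rightarrow> 'a set \<Rightarrow> 'a set \<Rightarrow> 'a \<Rightarrow> complex" where
  "birth_integrand b G \<eta> \<xi> x = G (insert x \<xi>) * of_real (Kinv (\<lambda>\<zeta>. b x (\<zeta> \<union> \<xi>)) (\<eta> - \<xi>))"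

definition L1 :: "('a::euclidean_space \<Rightarrow> 'a set \<Rightarrow> real) \<Rightarrow> ('a \<Rightarrow> 'a set \<Rightarrow> real)
    \<Rightarrow> ('a set \<Rightarrow> complex) \<Rightarrow> 'a set \<Rightarrow> complex" where
  "L1 d b G \<eta> =
     - (\<Sum>\<xi>\<in>{\<xi>. \<xi> \<subset> \<eta>}. G \<xi> * of_real (\<Sum>x\<in>\<xi>. Kinv (\<lambda>\<zeta>. d x (\<zeta> \<union> (\<xi> - {x}))) (\<eta> - \<xi>)))
     + (\<Sum>\<xi>\<in>Pow \<eta>. \<integral>x. birth_integrand b G \<eta> \<xi> x \<partial>lborel)"

end

theory Submission
  imports Defs
begin

(*
  Writing eta = xi u zeta, (L_1 G)(eta) is a sum
  over splittings of death summands G(xi) K_0^{-1}d(zeta) and birth summands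
  int G(xi u t) K_0^{-1}b(zeta) dt.  After bounding absolute values termwise, the
  splitting inequality int sum_{xi <= eta} F(xi, eta\xi) <= int int F separates xi
  from zeta.  The death part is then at most (a_1 - 1) ||L_0 G||, because the empty
  zeta alone contributes D(xi); for the birth part the Mecke formula moves the new
  point t into the configuration, giving (a_2 / C) ||L_0 G||.  Since |D/(z + D)| <= 1
  for Re z > 0 the resolvent bound follows, and finiteness of the birth part gives
  integrability of the t-integrands almost everywhere.
*)

section \<open>Measurability on the configuration space\<close>

text \<open>A configuration with n points is the image cfg n x of a chart point
  x \<in> (R^d)^n, and the n-point part of the Lebesgue--Poisson measure lives on the
  n-fold product of Lebesgue measure.\<close>
abbreviation PiL :: "nat \<Rightarrow> (nat \<Rightarrow> 'a::euclidean_space) measure" where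
  "PiL n \<equiv> PiM {..<n} (\<lambda>_. lborel)"

lemma finite_cfg [simp]: "finite (cfg n x)"
  by (simp add: cfg_def)

lemma cfg_0 [simp]: "cfg 0 x = {}"
  by (simp add: cfg_def)

lemma cfg_nonempty: "0 < n \<Longrightarrow> cfg n x \<noteq> {}"
  by (auto simp: cfg_def)

lemma cfg_restrict: "cfg k (\<lambda>i\<in>{..<k}. f i) = f ` {..<k}"
  by (auto simp: cfg_def)

lemma cfg_Suc_upd: "cfg (Suc k) (y(k := t)) = insert t (cfg k y)"
  by (auto simp: cfg_def lessThan_Suc)

lemma product_sigma_finite_lborel: "product_sigma_finite (\<lambda>_::nat. lborel :: 'a::euclidean_space measure)"
  unfolding product_sigma_finite_def by (auto intro: lborel.sigma_finite_measure_axioms)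

lemma sigma_finite_PiL: "sigma_finite_measure (PiL m :: (nat \<Rightarrow> 'a::euclidean_space) measure)"
  by (rule product_sigma_finite.sigma_finite[OF product_sigma_finite_lborel]) auto

lemma measurable_coordinate:
  "i \<in> I \<Longrightarrow> (\<lambda>y. y i) \<in> borel_measurable (PiM I (\<lambda>_. lborel :: 'a::euclidean_space measure))"
  using measurable_component_singleton[of i I "\<lambda>_. lborel :: 'a measure"] by simp

definition cfg_meas :: "('a::euclidean_space set \<Rightarrow> 'b::topological_space) \<Rightarrow> bool" where
  "cfg_meas g \<longleftrightarrow> (\<forall>n. (\<lambda>x. g (cfg n x)) \<in> borel_measurable (PiL n))"

definition cfg_meas_pt :: "('a::euclidean_space set \<Rightarrow> 'a \<Rightarrow> 'b::topological_space) \<Rightarrow> bool" where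
  "cfg_meas_pt H \<longleftrightarrow> (\<forall>n. (\<lambda>(x, t). H (cfg n x) t) \<in> borel_measurable (PiL n \<Otimes>\<^sub>M lborel))"

definition cfg_meas2 :: "('a::euclidean_space set \<Rightarrow> 'a set \<Rightarrow> 'b::topological_space) \<Rightarrow> bool" where
  "cfg_meas2 F \<longleftrightarrow> (\<forall>k m. (\<lambda>(x, y). F (cfg k x) (cfg m y)) \<in> borel_measurable (PiL k \<Otimes>\<^sub>M PiL m))"

definition cfg_meas2_pt :: "('a::euclidean_space set \<Rightarrow> 'a set \<Rightarrow> 'a \<Rightarrow> 'b::topological_space) \<Rightarrow> bool" where
  "cfg_meas2_pt F \<longleftrightarrow> (\<forall>k m. (\<lambda>((x, y), t). F (cfg k x) (cfg m y) t)
      \<in> borel_measurable ((PiL k \<Otimes>\<^sub>M PiL m) \<Otimes>\<^sub>M lborel))"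

lemma LP_meas_iff_cfg_meas: "LP_meas G \<longleftrightarrow> cfg_meas G"
  unfolding LP_meas_def cfg_meas_def ..

lemma cfg_enumerate:
  fixes u :: "'i \<Rightarrow> 'n \<Rightarrow> 'a::euclidean_space"
  assumes A: "finite A" and u: "\<And>i. i \<in> A \<Longrightarrow> u i \<in> borel_measurable N"
  obtains \<phi> where "\<phi> \<in> measurable N (PiL (card A))"
    and "\<And>\<omega>. cfg (card A) (\<phi> \<omega>) = (\<lambda>i. u i \<omega>) ` A"
proof -
  obtain e where e: "bij_betw e {..<card A} A"
    using ex_bij_betw_nat_finite[OF A] by (auto simp: atLeast0LessThan)
  show ?thesis
  proof
    show "(\<lambda>\<omega>. \<lambda>i\<in>{..<card A}. u (e i) \<omega>) \<in> measurable N (PiL (card A))"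
      by (rule measurable_restrict) (use e u in \<open>auto simp: bij_betw_def\<close>)
    show "cfg (card A) (\<lambda>i\<in>{..<card A}. u (e i) \<omega>) = (\<lambda>i. u i \<omega>) ` A" for \<omega>
      using e by (simp add: cfg_restrict bij_betw_def image_image[of "\<lambda>i. u i \<omega>" e, symmetric])
  qed
qed

lemma cfg_meas_image:
  fixes u :: "'i \<Rightarrow> 'n \<Rightarrow> 'a::euclidean_space"
  assumes g: "cfg_meas g" and A: "finite A" and u: "\<And>i. i \<in> A \<Longrightarrow> u i \<in> borel_measurable N"
  shows "(\<lambda>\<omega>. g ((\<lambda>i. u i \<omega>) ` A)) \<in> borel_measurable N"
proof -
  obtain \<phi> where \<phi>: "\<phi> \<in> measurable N (PiL (card A))" "\<And>\<omega>. cfg (card A) (\<phi> \<omega>) = (\<lambda>i. u i \<omega>) ` A"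
    using cfg_enumerate[of A u N] A u by blast
  have "(\<lambda>\<omega>. g (cfg (card A) (\<phi> \<omega>))) \<in> borel_measurable N"
    using measurable_compose[OF \<phi>(1)] g unfolding cfg_meas_def by blast
  then show ?thesis by (simp add: \<phi>(2))
qed

lemma cfg_meas_pt_image:
  fixes u :: "'i \<Rightarrow> 'n \<Rightarrow> 'a::euclidean_space"
  assumes H: "cfg_meas_pt H" and A: "finite A" and u: "\<And>i. i \<in> A \<Longrightarrow> u i \<in> borel_measurable N"
    and v: "v \<in> borel_measurable N"
  shows "(\<lambda>\<omega>. H ((\<lambda>i. u i \<omega>) ` A) (v \<omega>)) \<in> borel_measurable N"
proof -
  obtain \<phi> where \<phi>: "\<phi> \<in> measurable N (PiL (card A))" "\<And>\<omega>. cfg (card A) (\<phi> \<omega>) = (\<lambda>i. u i \<omega>) ` A"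
    using cfg_enumerate[of A u N] A u by blast
  have "(\<lambda>\<omega>. (\<phi> \<omega>, v \<omega>)) \<in> measurable N (PiL (card A) \<Otimes>\<^sub>M lborel)"
    using \<phi>(1) v by measurable
  from measurable_compose[OF this, of "\<lambda>(x, t). H (cfg (card A) x) t"] H
  have "(\<lambda>\<omega>. H (cfg (card A) (\<phi> \<omega>)) (v \<omega>)) \<in> borel_measurable N"
    unfolding cfg_meas_pt_def by simp
  then show ?thesis by (simp add: \<phi>(2))
qed

lemma rate_meas_image:
  fixes u :: "'i \<Rightarrow> 'n \<Rightarrow> 'a::euclidean_space"
  assumes r: "rate_meas r" and A: "finite A" and u: "\<And>i. i \<in> A \<Longrightarrow> u i \<in> borel_measurable N"
    and v: "v \<in> borel_measurable N"
  shows "(\<lambda>\<omega>. r (v \<omega>) ((\<lambda>i. u i \<omega>) ` A)) \<in> borel_measurable N"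
proof -
  obtain \<phi> where \<phi>: "\<phi> \<in> measurable N (PiL (card A))" "\<And>\<omega>. cfg (card A) (\<phi> \<omega>) = (\<lambda>i. u i \<omega>) ` A"
    using cfg_enumerate[of A u N] A u by blast
  have "(\<lambda>\<omega>. (v \<omega>, \<phi> \<omega>)) \<in> measurable N (lborel \<Otimes>\<^sub>M PiL (card A))"
    using \<phi>(1) v by measurable
  from measurable_compose[OF this, of "\<lambda>(x, y). r x (cfg (card A) y)"] r
  have "(\<lambda>\<omega>. r (v \<omega>) (cfg (card A) (\<phi> \<omega>))) \<in> borel_measurable N"
    unfolding rate_meas_def by simp
  then show ?thesis by (simp add: \<phi>(2))
qed

lemma cfg_meas2_image:
  fixes u :: "'i \<Rightarrow> 'n \<Rightarrow> 'a::euclidean_space"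
  assumes F: "cfg_meas2 F" and A: "finite A" "finite B"
    and u: "\<And>i. i \<in> A \<union> B \<Longrightarrow> u i \<in> borel_measurable N"
  shows "(\<lambda>\<omega>. F ((\<lambda>i. u i \<omega>) ` A) ((\<lambda>i. u i \<omega>) ` B)) \<in> borel_measurable N"
proof -
  obtain \<phi> where \<phi>: "\<phi> \<in> measurable N (PiL (card A))" "\<And>\<omega>. cfg (card A) (\<phi> \<omega>) = (\<lambda>i. u i \<omega>) ` A"
    using cfg_enumerate[of A u N] A u by blast
  obtain \<psi> where \<psi>: "\<psi> \<in> measurable N (PiL (card B))" "\<And>\<omega>. cfg (card B) (\<psi> \<omega>) = (\<lambda>i. u i \<omega>) ` B"
    using cfg_enumerate[of B u N] A u by blast
  have "(\<lambda>\<omega>. (\<phi> \<omega>, \<psi> \<omega>)) \<in> measurable N (PiL (card A) \<Otimes>\<^sub>M PiL (card B))"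
    using \<phi>(1) \<psi>(1) by measurable
  from measurable_compose[OF this, of "\<lambda>(x, y). F (cfg (card A) x) (cfg (card B) y)"] F
  have "(\<lambda>\<omega>. F (cfg (card A) (\<phi> \<omega>)) (cfg (card B) (\<psi> \<omega>))) \<in> borel_measurable N"
    unfolding cfg_meas2_def by simp
  then show ?thesis by (simp add: \<phi>(2) \<psi>(2))
qed

lemma measurable_select_subset_gen:
  assumes A: "finite A" and K: "\<And>\<omega>. \<omega> \<in> space N \<Longrightarrow> K \<omega> \<subseteq> A"
    and S: "\<And>J. J \<subseteq> A \<Longrightarrow> {\<omega>\<in>space N. K \<omega> = J} \<in> sets N"
    and g: "\<And>J. J \<subseteq> A \<Longrightarrow> g J \<in> measurable N M"
  shows "(\<lambda>\<omega>. g (K \<omega>) \<omega>) \<in> measurable N M"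
proof (rule measurable_piecewise_restrict[where C="(\<lambda>J. {\<omega>. K \<omega> = J}) ` Pow A"])
  show "countable ((\<lambda>J. {\<omega>. K \<omega> = J}) ` Pow A)" using A by (intro countable_image countable_finite) auto
  show "\<Omega> \<inter> space N \<in> sets N" if "\<Omega> \<in> (\<lambda>J. {\<omega>. K \<omega> = J}) ` Pow A" for \<Omega>
    using that S by (auto simp: Int_def conj_commute)
  show "space N \<subseteq> \<Union> ((\<lambda>J. {\<omega>. K \<omega> = J}) ` Pow A)" using K by auto
  show "(\<lambda>\<omega>. g (K \<omega>) \<omega>) \<in> measurable (restrict_space N \<Omega>) M" if "\<Omega> \<in> (\<lambda>J. {\<omega>. K \<omega> = J}) ` Pow A" for \<Omega>
  proof -
    from that obtain J where J: "J \<subseteq> A" "\<Omega> = {\<omega>. K \<omega> = J}" by auto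
    have "g J \<in> measurable (restrict_space N \<Omega>) M"
      using g[OF J(1)] by (rule measurable_restrict_space1)
    then show ?thesis
      by (rule measurable_cong[THEN iffD1, rotated]) (auto simp: J space_restrict_space)
  qed
qed

lemma measurable_select_subset:
  assumes A: "finite A" and P: "\<And>i. i \<in> A \<Longrightarrow> Measurable.pred N (P i)"
    and g: "\<And>J. J \<subseteq> A \<Longrightarrow> g J \<in> measurable N M"
  shows "(\<lambda>\<omega>. g {i\<in>A. P i \<omega>} \<omega>) \<in> measurable N M"
proof (rule measurable_select_subset_gen[OF A _ _ g])
  fix J assume J: "J \<subseteq> A"
  have "{\<omega>\<in>space N. {i\<in>A. P i \<omega>} = J} = {\<omega>\<in>space N. \<forall>i\<in>A. P i \<omega> \<longleftrightarrow> i \<in> J}"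
    using J by auto
  also have "\<dots> \<in> sets N"
  proof -
    have "Measurable.pred N (\<lambda>\<omega>. P i \<omega> \<longleftrightarrow> i \<in> J)" if "i \<in> A" for i
      using P[OF that] pred_intros_logic(2)[OF P[OF that]] by (cases "i \<in> J") simp_all
    then have "Measurable.pred N (\<lambda>\<omega>. \<forall>i\<in>A. P i \<omega> \<longleftrightarrow> i \<in> J)"
      using A by (intro pred_intros_finite) auto
    then show ?thesis unfolding pred_def .
  qed
  finally show "{\<omega>\<in>space N. {i\<in>A. P i \<omega>} = J} \<in> sets N" .
qed auto

lemma pred_eq_points:
  fixes u v :: "'n \<Rightarrow> 'a::euclidean_space"
  assumes "u \<in> borel_measurable N" "v \<in> borel_measurable N"
  shows "Measurable.pred N (\<lambda>\<omega>. u \<omega> = v \<omega>)" and "Measurable.pred N (\<lambda>\<omega>. u \<omega> \<noteq> v \<omega>)"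
proof -
  show eq: "Measurable.pred N (\<lambda>\<omega>. u \<omega> = v \<omega>)"
    unfolding pred_def by (rule measurable_equality_set[OF assms])
  show "Measurable.pred N (\<lambda>\<omega>. u \<omega> \<noteq> v \<omega>)"
    by (rule pred_intros_logic(2)[OF eq])
qed

text \<open>For a labelling x of the index set A, the subsets of the configuration x ` A
  correspond bijectively to the saturated index sets I, i.e.\ those containing
  every index whose label is hit by I.\<close>
definition saturated :: "('i \<Rightarrow> 'a) \<Rightarrow> 'i set \<Rightarrow> 'i set \<Rightarrow> bool" where
  "saturated x A I \<longleftrightarrow> (\<forall>i\<in>A. x i \<in> x ` I \<longrightarrow> i \<in> I)"

lemma saturated_image_diff:
  "saturated x A I \<Longrightarrow> I \<subseteq> A \<Longrightarrow> x ` A - x ` I = x ` (A - I)"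
  unfolding saturated_def by auto

lemma bij_betw_saturated:
  "bij_betw (\<lambda>I. x ` I) {I\<in>Pow A. saturated x A I} (Pow (x ` A))"
proof (rule bij_betw_imageI)
  have sub: "I \<subseteq> J" if "I \<subseteq> A" "saturated x A J" "x ` I = x ` J" for I J
    using that unfolding saturated_def by blast
  show "inj_on (\<lambda>I. x ` I) {I\<in>Pow A. saturated x A I}"
    by (rule inj_onI) (use sub in \<open>blast intro: equalityI\<close>)
  show "(\<lambda>I. x ` I) ` {I\<in>Pow A. saturated x A I} = Pow (x ` A)"
  proof (intro equalityI subsetI)
    fix S assume "S \<in> Pow (x ` A)"
    then have "S = x ` {i\<in>A. x i \<in> S}" "{i\<in>A. x i \<in> S} \<in> {I\<in>Pow A. saturated x A I}"
      by (auto simp: saturated_def)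
    then show "S \<in> (\<lambda>I. x ` I) ` {I\<in>Pow A. saturated x A I}" by blast
  qed auto
qed

lemma sum_Pow_image:
  fixes h :: "'a set \<Rightarrow> 'b::comm_monoid_add"
  assumes A: "finite A"
  shows "(\<Sum>S\<in>Pow (x ` A). h S) = (\<Sum>I\<in>Pow A. if saturated x A I then h (x ` I) else 0)"
proof -
  have "(\<Sum>S\<in>Pow (x ` A). h S) = (\<Sum>I\<in>{I\<in>Pow A. saturated x A I}. h (x ` I))"
    by (rule sum.reindex_bij_betw[OF bij_betw_saturated, symmetric])
  also have "\<dots> = (\<Sum>I\<in>Pow A. if saturated x A I then h (x ` I) else 0)"
    using sum.inter_filter[of "Pow A" "\<lambda>I. h (x ` I)" "saturated x A"] A by simp
  finally show ?thesis .
qed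

lemma sum_image_first_index:
  fixes h :: "'a \<Rightarrow> 'b::comm_monoid_add" and x :: "nat \<Rightarrow> 'a"
  assumes A: "finite A"
  shows "(\<Sum>v\<in>x ` A. h v) = (\<Sum>i\<in>A. if (\<forall>j\<in>A. j < i \<longrightarrow> x j \<noteq> x i) then h (x i) else 0)"
proof -
  define F where "F = {i\<in>A. \<forall>j\<in>A. j < i \<longrightarrow> x j \<noteq> x i}"
  have "inj_on x F"
    by (rule inj_onI) (auto simp: F_def dest: linorder_neqE_nat)
  moreover have "x ` A \<subseteq> x ` F"
  proof
    fix v assume "v \<in> x ` A"
    then have ne: "{j\<in>A. x j = v} \<noteq> {}" by auto
    define m where "m = Min {j\<in>A. x j = v}"
    have fin: "finite {j\<in>A. x j = v}" using A by simp
    have "m \<in> {j\<in>A. x j = v}" "\<And>j. j \<in> {j\<in>A. x j = v} \<Longrightarrow> m \<le> j"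
      unfolding m_def using Min_in[OF fin ne] Min_le[OF fin] by auto
    then have "m \<in> F" "x m = v" unfolding F_def by force+
    then show "v \<in> x ` F" by blast
  qed
  then have "x ` F = x ` A" unfolding F_def by blast
  ultimately have "(\<Sum>v\<in>x ` A. h v) = (\<Sum>i\<in>F. h (x i))"
    by (metis sum.reindex comp_apply sum.cong)
  also have "\<dots> = (\<Sum>i\<in>A. if (\<forall>j\<in>A. j < i \<longrightarrow> x j \<noteq> x i) then h (x i) else 0)"
    unfolding F_def using A by (rule sum.inter_filter)
  finally show ?thesis .
qed

lemma pred_saturated:
  fixes u :: "nat \<Rightarrow> 'n \<Rightarrow> 'a::euclidean_space"
  assumes A: "finite A" and I: "I \<subseteq> A" and u: "\<And>i. i \<in> A \<Longrightarrow> u i \<in> borel_measurable N"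
  shows "Measurable.pred N (\<lambda>\<omega>. saturated (\<lambda>i. u i \<omega>) A I)"
proof -
  have fI: "finite I" using A I finite_subset by blast
  have "Measurable.pred N (\<lambda>\<omega>. (\<exists>j\<in>I. u i \<omega> = u j \<omega>) \<longrightarrow> i \<in> I)" if i: "i \<in> A" for i
  proof (cases "i \<in> I")
    case False
    have "Measurable.pred N (\<lambda>\<omega>. \<exists>j\<in>I. u i \<omega> = u j \<omega>)"
      using fI I i by (intro pred_intros_finite(4)[OF fI] pred_eq_points(1) u) auto
    from pred_intros_logic(2)[OF this] False show ?thesis by simp
  qed simp
  then have "Measurable.pred N (\<lambda>\<omega>. \<forall>i\<in>A. (\<exists>j\<in>I. u i \<omega> = u j \<omega>) \<longrightarrow> i \<in> I)"
    by (rule pred_intros_finite(3)[OF A])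
  moreover have "saturated (\<lambda>i. u i \<omega>) A I \<longleftrightarrow> (\<forall>i\<in>A. (\<exists>j\<in>I. u i \<omega> = u j \<omega>) \<longrightarrow> i \<in> I)" for \<omega>
    unfolding saturated_def by blast
  ultimately show ?thesis by simp
qed

lemma measurable_sum_Pow_image:
  fixes u :: "nat \<Rightarrow> 'n \<Rightarrow> 'a::euclidean_space"
    and \<Psi> :: "'n \<Rightarrow> 'a set \<Rightarrow> 'b::{second_countable_topology, topological_comm_monoid_add}"
  assumes A: "finite A" and u: "\<And>i. i \<in> A \<Longrightarrow> u i \<in> borel_measurable N"
    and \<Psi>': "\<And>I. I \<subseteq> A \<Longrightarrow> \<Psi>' I \<in> borel_measurable N"
    and eq: "\<And>\<omega> I. I \<subseteq> A \<Longrightarrow> saturated (\<lambda>i. u i \<omega>) A I \<Longrightarrow> \<Psi> \<omega> ((\<lambda>i. u i \<omega>) ` I) = \<Psi>' I \<omega>"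
  shows "(\<lambda>\<omega>. \<Sum>S\<in>Pow ((\<lambda>i. u i \<omega>) ` A). \<Psi> \<omega> S) \<in> borel_measurable N"
proof -
  have "(\<lambda>\<omega>. \<Sum>I\<in>Pow A. if saturated (\<lambda>i. u i \<omega>) A I then \<Psi>' I \<omega> else 0) \<in> borel_measurable N"
  proof (rule borel_measurable_sum)
    fix I assume I: "I \<in> Pow A"
    have "{\<omega>\<in>space N. saturated (\<lambda>i. u i \<omega>) A I} \<in> sets N"
      using pred_saturated[OF A _ u, of I] I unfolding pred_def by auto
    then show "(\<lambda>\<omega>. if saturated (\<lambda>i. u i \<omega>) A I then \<Psi>' I \<omega> else 0) \<in> borel_measurable N"
      using I by (intro measurable_If \<Psi>') auto
  qed
  moreover have "(\<Sum>S\<in>Pow ((\<lambda>i. u i \<omega>) ` A). \<Psi> \<omega> S)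
      = (\<Sum>I\<in>Pow A. if saturated (\<lambda>i. u i \<omega>) A I then \<Psi>' I \<omega> else 0)" for \<omega>
    unfolding sum_Pow_image[OF A] by (rule sum.cong[OF refl]) (simp add: eq)
  ultimately show ?thesis by simp
qed

lemma measurable_sum_image:
  fixes u :: "nat \<Rightarrow> 'n \<Rightarrow> 'a::euclidean_space"
    and \<Psi> :: "'n \<Rightarrow> 'a \<Rightarrow> 'b::{second_countable_topology, topological_comm_monoid_add}"
  assumes A: "finite A" and u: "\<And>i. i \<in> A \<Longrightarrow> u i \<in> borel_measurable N"
    and \<Psi>: "\<And>i. i \<in> A \<Longrightarrow> (\<lambda>\<omega>. \<Psi> \<omega> (u i \<omega>)) \<in> borel_measurable N"
  shows "(\<lambda>\<omega>. \<Sum>v\<in>(\<lambda>i. u i \<omega>) ` A. \<Psi> \<omega> v) \<in> borel_measurable N"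
proof -
  have "(\<lambda>\<omega>. \<Sum>i\<in>A. if (\<forall>j\<in>A. j < i \<longrightarrow> u j \<omega> \<noteq> u i \<omega>) then \<Psi> \<omega> (u i \<omega>) else 0)
      \<in> borel_measurable N"
  proof (rule borel_measurable_sum)
    fix i assume i: "i \<in> A"
    have "Measurable.pred N (\<lambda>\<omega>. j < i \<longrightarrow> u j \<omega> \<noteq> u i \<omega>)" if "j \<in> A" for j
      using pred_eq_points(2)[OF u[OF that] u[OF i]] by (cases "j < i") simp_all
    then have "Measurable.pred N (\<lambda>\<omega>. \<forall>j\<in>A. j < i \<longrightarrow> u j \<omega> \<noteq> u i \<omega>)"
      by (rule pred_intros_finite(3)[OF A])
    then have "{\<omega>\<in>space N. \<forall>j\<in>A. j < i \<longrightarrow> u j \<omega> \<noteq> u i \<omega>} \<in> sets N"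
      by (simp only: pred_def)
    then show "(\<lambda>\<omega>. if (\<forall>j\<in>A. j < i \<longrightarrow> u j \<omega> \<noteq> u i \<omega>) then \<Psi> \<omega> (u i \<omega>) else 0) \<in> borel_measurable N"
      by (rule measurable_If[OF \<Psi>[OF i] borel_measurable_const])
  qed
  then show ?thesis by (simp only: sum_image_first_index[OF A])
qed

lemma measurable_card_image:
  fixes u :: "nat \<Rightarrow> 'n \<Rightarrow> 'a::euclidean_space" and h :: "nat \<Rightarrow> 'b::topological_space"
  assumes A: "finite A" and u: "\<And>i. i \<in> A \<Longrightarrow> u i \<in> borel_measurable N"
  shows "(\<lambda>\<omega>. h (card ((\<lambda>i. u i \<omega>) ` A))) \<in> borel_measurable N"
proof -
  have real_card: "(\<lambda>\<omega>. real (card ((\<lambda>i. u i \<omega>) ` A))) \<in> borel_measurable N"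
    using measurable_sum_image[OF A u, where \<Psi>="\<lambda>_ _. 1 :: real"] by simp
  have "(\<lambda>\<omega>. card ((\<lambda>i. u i \<omega>) ` A)) \<in> measurable N (count_space UNIV)"
    unfolding measurable_count_space_eq2_countable
  proof (intro conjI ballI)
    fix n :: nat
    have "{\<omega>\<in>space N. real (card ((\<lambda>i. u i \<omega>) ` A)) = real n} \<in> sets N"
      by (rule measurable_equality_set[OF real_card measurable_const]) simp
    then show "(\<lambda>\<omega>. card ((\<lambda>i. u i \<omega>) ` A)) -` {n} \<inter> space N \<in> sets N"
      by (simp add: vimage_def Int_def conj_commute)
  qed simp
  then show ?thesis
    by (rule measurable_compose) (simp add: measurable_count_space_eq1)
qed

lemma cfg_meas_card: "cfg_meas (\<lambda>S::'a::euclidean_space set. h (card S))"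
  unfolding cfg_meas_def cfg_def
proof
  fix n
  show "(\<lambda>x. h (card (x ` {..<n}))) \<in> borel_measurable (PiL n :: (nat \<Rightarrow> 'a) measure)"
    using measurable_card_image[of "{..<n}" "\<lambda>i x. x i" "PiL n :: (nat \<Rightarrow> 'a) measure" h]
    by (simp add: measurable_coordinate)
qed

lemma cfg_meas_nonempty: "cfg_meas (\<lambda>\<zeta>::'a::euclidean_space set. of_bool (\<zeta> \<noteq> {}) :: 'b::{zero_neq_one, topological_space})"
proof -
  have "cfg n x \<noteq> {} \<longleftrightarrow> 0 < n" for n and x :: "nat \<Rightarrow> 'a" by (auto simp: cfg_def)
  then show ?thesis unfolding cfg_meas_def by simp
qed

lemma cfg_meas_comp: "cfg_meas F \<Longrightarrow> h \<in> borel_measurable borel \<Longrightarrow> cfg_meas (\<lambda>\<xi>. h (F \<xi>))"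
  unfolding cfg_meas_def by (auto intro: measurable_compose)

lemma cfg_meas_mult:
  fixes F G :: "'a::euclidean_space set \<Rightarrow> 'b::{second_countable_topology, real_normed_algebra}"
  shows "cfg_meas F \<Longrightarrow> cfg_meas G \<Longrightarrow> cfg_meas (\<lambda>\<xi>. F \<xi> * G \<xi>)"
  unfolding cfg_meas_def by (auto intro: borel_measurable_times)

lemma cfg_meas_add:
  fixes F G :: "'a::euclidean_space set \<Rightarrow> 'b::{second_countable_topology, topological_monoid_add}"
  shows "cfg_meas F \<Longrightarrow> cfg_meas G \<Longrightarrow> cfg_meas (\<lambda>\<xi>. F \<xi> + G \<xi>)"
  unfolding cfg_meas_def by (auto intro: borel_measurable_add)

lemma cfg_meas_sum:
  fixes f :: "'i \<Rightarrow> 'a::euclidean_space set \<Rightarrow> ennreal"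
  shows "(\<And>i. i \<in> S \<Longrightarrow> cfg_meas (f i)) \<Longrightarrow> cfg_meas (\<lambda>\<eta>. \<Sum>i\<in>S. f i \<eta>)"
  unfolding cfg_meas_def by (intro allI borel_measurable_sum) auto

lemma cfg_meas_pt_mult_ennreal:
  fixes F G :: "'a::euclidean_space set \<Rightarrow> 'a \<Rightarrow> ennreal"
  shows "cfg_meas_pt F \<Longrightarrow> cfg_meas_pt G \<Longrightarrow> cfg_meas_pt (\<lambda>\<xi> t. F \<xi> t * G \<xi> t)"
  unfolding cfg_meas_pt_def split_beta' by (auto intro: borel_measurable_times_ennreal)

lemma cfg_meas2_comp: "cfg_meas2 F \<Longrightarrow> h \<in> borel_measurable borel \<Longrightarrow> cfg_meas2 (\<lambda>\<xi> \<zeta>. h (F \<xi> \<zeta>))"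
  unfolding cfg_meas2_def by (auto intro: measurable_compose[of _ _ borel] simp: split_beta')

lemma cfg_meas2_mult:
  fixes F G :: "'a::euclidean_space set \<Rightarrow> 'a set \<Rightarrow> 'b::{second_countable_topology, real_normed_algebra}"
  shows "cfg_meas2 F \<Longrightarrow> cfg_meas2 G \<Longrightarrow> cfg_meas2 (\<lambda>\<xi> \<zeta>. F \<xi> \<zeta> * G \<xi> \<zeta>)"
  unfolding cfg_meas2_def split_beta' by (auto intro: borel_measurable_times)

lemma cfg_meas2_pt_comp:
  "cfg_meas2_pt F \<Longrightarrow> h \<in> borel_measurable borel \<Longrightarrow> cfg_meas2_pt (\<lambda>\<xi> \<zeta> t. h (F \<xi> \<zeta> t))"
  unfolding cfg_meas2_pt_def by (auto intro: measurable_compose[of _ _ borel] simp: split_beta')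

lemma cfg_meas2_pt_mult:
  fixes F G :: "'a::euclidean_space set \<Rightarrow> 'a set \<Rightarrow> 'a \<Rightarrow> 'b::{second_countable_topology, real_normed_algebra}"
  shows "cfg_meas2_pt F \<Longrightarrow> cfg_meas2_pt G \<Longrightarrow> cfg_meas2_pt (\<lambda>\<xi> \<zeta> t. F \<xi> \<zeta> t * G \<xi> \<zeta> t)"
  unfolding cfg_meas2_pt_def split_beta' by (auto intro: borel_measurable_times)

text \<open>Charts of several configurations (and points) are combined into one labelling
  of an initial segment of the naturals; this lets the transfer lemmas above treat
  functions of several configurations at once.\<close>
definition join :: "nat \<Rightarrow> (nat \<Rightarrow> 'a) \<Rightarrow> (nat \<Rightarrow> 'a) \<Rightarrow> nat \<Rightarrow> 'a" where
  "join k x y i = (if i < k then x i else y (i - k))"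

lemma join_image_low: "join k x y ` {..<k} = cfg k x"
  unfolding join_def cfg_def by auto

lemma join_image_high: "join k x y ` {k..<k + m} = cfg m y"
proof -
  have "{k..<k + m} = plus k ` {..<m}"
    using image_add_atLeastLessThan[of k 0 m] by (simp add: atLeast0LessThan add.commute)
  then have "join k x y ` {k..<k + m} = (\<lambda>j. join k x y (k + j)) ` {..<m}"
    by (simp only: image_image)
  then show ?thesis by (simp add: join_def cfg_def)
qed

lemma measurable_coord:
  "f \<in> measurable N (PiM I (\<lambda>_. lborel :: 'a::euclidean_space measure)) \<Longrightarrow> i \<in> I
    \<Longrightarrow> (\<lambda>\<omega>. f \<omega> i) \<in> borel_measurable N"
  by (rule measurable_compose[OF _ measurable_coordinate])

lemma measurable_join:
  fixes x y :: "'n \<Rightarrow> nat \<Rightarrow> 'a::euclidean_space"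
  assumes x: "\<And>i. i < k \<Longrightarrow> (\<lambda>\<omega>. x \<omega> i) \<in> borel_measurable N"
    and y: "\<And>j. j < m \<Longrightarrow> (\<lambda>\<omega>. y \<omega> j) \<in> borel_measurable N" and i: "i < k + m"
  shows "(\<lambda>\<omega>. join k (x \<omega>) (y \<omega>) i) \<in> borel_measurable N"
proof (cases "i < k")
  case True
  then have "(\<lambda>\<omega>. join k (x \<omega>) (y \<omega>) i) = (\<lambda>\<omega>. x \<omega> i)"
    by (simp add: join_def)
  then show ?thesis by (simp only: x[OF True])
next
  case False
  with i have "i - k < m" "(\<lambda>\<omega>. join k (x \<omega>) (y \<omega>) i) = (\<lambda>\<omega>. y \<omega> (i - k))"
    by (auto simp: join_def)
  then show ?thesis by (simp only: y)
qed

lemma join_image_below: "A \<subseteq> {..<n} \<Longrightarrow> join n x y ` A = x ` A"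
  unfolding join_def by (intro image_cong) auto

lemma join_at_0: "join k x y k = y 0"
  by (simp add: join_def)

lemma measurable_fst_coord:
  "i \<in> I \<Longrightarrow> (\<lambda>p. fst p i) \<in> borel_measurable (PiM I (\<lambda>_. lborel :: 'a::euclidean_space measure) \<Otimes>\<^sub>M M)"
  by (rule measurable_coord[OF measurable_fst])

lemma measurable_snd_coord:
  "i \<in> I \<Longrightarrow> (\<lambda>p. snd p i) \<in> borel_measurable (M \<Otimes>\<^sub>M PiM I (\<lambda>_. lborel :: 'a::euclidean_space measure))"
  by (rule measurable_coord[OF measurable_snd])

definition chart2 :: "nat \<Rightarrow> (nat \<Rightarrow> 'a) \<times> (nat \<Rightarrow> 'a) \<Rightarrow> nat \<Rightarrow> 'a" where
  "chart2 k p = join k (fst p) (snd p)"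

definition chart_pt :: "nat \<Rightarrow> (nat \<Rightarrow> 'a) \<times> 'a \<Rightarrow> nat \<Rightarrow> 'a" where
  "chart_pt n p = join n (fst p) (\<lambda>_. snd p)"

definition chart2_pt :: "nat \<Rightarrow> nat \<Rightarrow> ((nat \<Rightarrow> 'a) \<times> (nat \<Rightarrow> 'a)) \<times> 'a \<Rightarrow> nat \<Rightarrow> 'a" where
  "chart2_pt k m q = join (k + m) (chart2 k (fst q)) (\<lambda>_. snd q)"

definition chart_pt2 :: "nat \<Rightarrow> ((nat \<Rightarrow> 'a) \<times> 'a) \<times> (nat \<Rightarrow> 'a) \<Rightarrow> nat \<Rightarrow> 'a" where
  "chart_pt2 n q = join (Suc n) (chart_pt n (fst q)) (snd q)"

lemma chart2_image:
  "chart2 k p ` {..<k} = cfg k (fst p)" "chart2 k p ` {k..<k + m} = cfg m (snd p)"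
  unfolding chart2_def by (simp_all only: join_image_low join_image_high)

lemma chart_pt_image:
  "chart_pt n p ` {..<n} = cfg n (fst p)" "chart_pt n p n = snd p"
  "chart_pt n p ` {..<Suc n} = insert (snd p) (cfg n (fst p))"
  unfolding chart_pt_def by (auto simp: join_image_low join_at_0 lessThan_Suc)

lemma chart2_pt_image:
  "chart2_pt k m q ` {..<k} = cfg k (fst (fst q))"
  "chart2_pt k m q ` {k..<k + m} = cfg m (snd (fst q))"
  "chart2_pt k m q (k + m) = snd q"
  unfolding chart2_pt_def
  by (simp_all add: join_image_below join_at_0 chart2_image subset_eq)

lemma chart_pt2_image:
  "chart_pt2 n q ` {..<n} = cfg n (fst (fst q))"
  "chart_pt2 n q n = snd (fst q)"
  "chart_pt2 n q ` {Suc n..<Suc n + m} = cfg m (snd q)"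
proof -
  show "chart_pt2 n q ` {..<n} = cfg n (fst (fst q))"
    unfolding chart_pt2_def by (simp add: join_image_below chart_pt_image)
  show "chart_pt2 n q n = snd (fst q)"
    unfolding chart_pt2_def by (simp add: join_def chart_pt_image)
  show "chart_pt2 n q ` {Suc n..<Suc n + m} = cfg m (snd q)"
    unfolding chart_pt2_def by (rule join_image_high)
qed

lemma measurable_chart2:
  "i < k + m \<Longrightarrow> (\<lambda>p. chart2 k p i) \<in> borel_measurable (PiL k \<Otimes>\<^sub>M PiL m :: ((nat \<Rightarrow> 'a::euclidean_space) \<times> _) measure)"
  unfolding chart2_def by (rule measurable_join) (auto intro: measurable_fst_coord measurable_snd_coord)

lemma measurable_chart_pt:
  "i < Suc n \<Longrightarrow> (\<lambda>p. chart_pt n p i) \<in> borel_measurable (PiL n \<Otimes>\<^sub>M (lborel :: 'a::euclidean_space measure))"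
  unfolding chart_pt_def by (rule measurable_join[where m=1]) (auto intro: measurable_fst_coord)

lemma measurable_chart2_pt:
  "i < Suc (k + m) \<Longrightarrow>
    (\<lambda>q. chart2_pt k m q i) \<in> borel_measurable ((PiL k \<Otimes>\<^sub>M PiL m) \<Otimes>\<^sub>M (lborel :: 'a::euclidean_space measure))"
  unfolding chart2_pt_def
  by (rule measurable_join[where m=1])
     (auto intro: measurable_compose[OF measurable_fst measurable_chart2])

lemma measurable_chart_pt2:
  "i < Suc n + m \<Longrightarrow>
    (\<lambda>q. chart_pt2 n q i) \<in> borel_measurable ((PiL n \<Otimes>\<^sub>M (lborel :: 'a::euclidean_space measure)) \<Otimes>\<^sub>M PiL m)"
  unfolding chart_pt2_def
  by (rule measurable_join)
     (auto intro: measurable_compose[OF measurable_fst measurable_chart_pt] measurable_snd_coord)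

text \<open>Every finite configuration is the configuration of some chart point; this lets
  us freeze a configuration argument of a jointly measurable function.\<close>
lemma cfg_chart:
  assumes "finite S"
  obtains e where "e \<in> space (PiL (card S) :: (nat \<Rightarrow> 'a::euclidean_space) measure)"
    and "cfg (card S) e = (S :: 'a set)"
proof -
  obtain f where f: "bij_betw f {..<card S} S"
    using ex_bij_betw_nat_finite[OF assms] by (auto simp: atLeast0LessThan)
  show ?thesis
  proof
    show "(\<lambda>i\<in>{..<card S}. f i) \<in> space (PiL (card S))" by (simp add: space_PiM)
    show "cfg (card S) (\<lambda>i\<in>{..<card S}. f i) = S"
      using f by (simp add: cfg_restrict bij_betw_def)
  qed
qed

lemma cfg_meas2_fix:
  assumes F: "cfg_meas2 F" and S: "finite S"
  shows "cfg_meas (F S)"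
  unfolding cfg_meas_def
proof
  fix n
  obtain e where e: "e \<in> space (PiL (card S))" "cfg (card S) e = S" using cfg_chart[OF S] .
  have "(\<lambda>z. (e, z)) \<in> measurable (PiL n) (PiL (card S) \<Otimes>\<^sub>M PiL n)"
    using e(1) by measurable
  from measurable_compose[OF this F[unfolded cfg_meas2_def, rule_format]]
  show "(\<lambda>z. F S (cfg n z)) \<in> borel_measurable (PiL n)" by (simp add: e(2))
qed

lemma cfg_meas2_pt_fix:
  assumes F: "cfg_meas2_pt F" and S: "finite S"
  shows "cfg_meas_pt (F S)"
  unfolding cfg_meas_pt_def
proof
  fix m
  obtain e where e: "e \<in> space (PiL (card S))" "cfg (card S) e = S" using cfg_chart[OF S] .
  have "(\<lambda>(z, t). ((e, z), t)) \<in> measurable (PiL m \<Otimes>\<^sub>M lborel) ((PiL (card S) \<Otimes>\<^sub>M PiL m) \<Otimes>\<^sub>M lborel)"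
    using e(1) by measurable
  from measurable_compose[OF this F[unfolded cfg_meas2_pt_def, rule_format]]
  show "(\<lambda>(z, t). F S (cfg m z) t) \<in> borel_measurable (PiL m \<Otimes>\<^sub>M lborel)"
    by (simp add: e(2) split_beta')
qed

lemma cfg_meas_pt_fix_cfg:
  assumes F: "cfg_meas_pt F" and S: "finite S"
  shows "F S \<in> borel_measurable lborel"
proof -
  obtain e where e: "e \<in> space (PiL (card S))" "cfg (card S) e = S" using cfg_chart[OF S] .
  have "(\<lambda>t. (e, t)) \<in> measurable lborel (PiL (card S) \<Otimes>\<^sub>M lborel)"
    using e(1) by measurable
  from measurable_compose[OF this F[unfolded cfg_meas_pt_def, rule_format]]
  show ?thesis by (simp add: e(2))
qed

lemma cfg_meas_pt_fix_pt:
  assumes F: "cfg_meas_pt F"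
  shows "cfg_meas (\<lambda>\<zeta>. F \<zeta> y)"
  unfolding cfg_meas_def
proof
  fix m
  have "(\<lambda>z. (z, y)) \<in> measurable (PiL m) (PiL m \<Otimes>\<^sub>M lborel)"
    by measurable
  from measurable_compose[OF this F[unfolded cfg_meas_pt_def, rule_format]]
  show "(\<lambda>z. F (cfg m z) y) \<in> borel_measurable (PiL m)" by simp
qed

lemma cfg_meas_pt_const:
  assumes g: "cfg_meas g"
  shows "cfg_meas_pt (\<lambda>\<xi> t. g \<xi>)"
  unfolding cfg_meas_pt_def
proof
  fix n
  show "(\<lambda>(x, t). g (cfg n x)) \<in> borel_measurable (PiL n \<Otimes>\<^sub>M (lborel :: 'a measure))"
    using measurable_compose[OF measurable_fst[of "PiL n" "lborel :: 'a measure"] g[unfolded cfg_meas_def, rule_format, of n]]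
    by (simp add: comp_def split_beta)
qed

lemma cfg_meas2_left:
  assumes g: "cfg_meas g"
  shows "cfg_meas2 (\<lambda>\<xi> \<zeta>. g \<xi>)"
  unfolding cfg_meas2_def
proof (intro allI)
  fix k m
  show "(\<lambda>(x, y). g (cfg k x)) \<in> borel_measurable (PiL k \<Otimes>\<^sub>M (PiL m :: (nat \<Rightarrow> 'a) measure))"
    using measurable_compose[OF measurable_fst[of "PiL k" "PiL m :: (nat \<Rightarrow> 'a) measure"] g[unfolded cfg_meas_def, rule_format, of k]]
    by (simp add: comp_def split_beta)
qed

lemma cfg_meas2_right:
  assumes g: "cfg_meas g"
  shows "cfg_meas2 (\<lambda>\<xi> \<zeta>. g \<zeta>)"
  unfolding cfg_meas2_def
proof (intro allI)
  fix k m
  show "(\<lambda>(x, y). g (cfg m y)) \<in> borel_measurable ((PiL k :: (nat \<Rightarrow> 'a) measure) \<Otimes>\<^sub>M PiL m)"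
    using measurable_compose[OF measurable_snd[of "PiL k :: (nat \<Rightarrow> 'a) measure" "PiL m"] g[unfolded cfg_meas_def, rule_format, of m]]
    by (simp add: comp_def split_beta)
qed

lemma cfg_meas2_pt_lift:
  assumes g: "cfg_meas g"
  shows "cfg_meas2_pt (\<lambda>\<xi> \<zeta> t. g \<xi>)" and "cfg_meas2_pt (\<lambda>\<xi> \<zeta> t. g \<zeta>)"
    and "cfg_meas2_pt (\<lambda>\<xi> \<zeta> t. g (insert t \<xi>))"
proof -
  let ?N = "\<lambda>k m. (PiL k \<Otimes>\<^sub>M PiL m) \<Otimes>\<^sub>M lborel :: (((nat \<Rightarrow> 'a) \<times> (nat \<Rightarrow> 'a)) \<times> 'a) measure"
  have lift: "(\<lambda>q. g (chart2_pt k m q ` I)) \<in> borel_measurable (?N k m)" if "I \<subseteq> {..<Suc (k + m)}" for k m I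
  proof (rule cfg_meas_image[OF g, where u="\<lambda>i q. chart2_pt k m q i"])
    show "finite I" using that finite_subset by blast
  qed (use that in \<open>auto intro: measurable_chart2_pt\<close>)
  have ins: "chart2_pt k m q ` insert (k + m) {..<k} = insert (snd q) (cfg k (fst (fst q)))" for k m q
    by (simp add: chart2_pt_image)
  have "(\<lambda>q. g (cfg k (fst (fst q)))) \<in> borel_measurable (?N k m)" for k m
    using lift[of "{..<k}" k m] by (simp add: chart2_pt_image)
  then show "cfg_meas2_pt (\<lambda>\<xi> \<zeta> t. g \<xi>)"
    unfolding cfg_meas2_pt_def split_beta' by blast
  have "(\<lambda>q. g (cfg m (snd (fst q)))) \<in> borel_measurable (?N k m)" for k m
    using lift[of "{k..<k + m}" k m] by (simp add: chart2_pt_image subset_eq)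
  then show "cfg_meas2_pt (\<lambda>\<xi> \<zeta> t. g \<zeta>)"
    unfolding cfg_meas2_pt_def split_beta' by blast
  have "(\<lambda>q. g (insert (snd q) (cfg k (fst (fst q))))) \<in> borel_measurable (?N k m)" for k m
    using lift[of "insert (k + m) {..<k}" k m] by (simp only: ins) simp
  then show "cfg_meas2_pt (\<lambda>\<xi> \<zeta> t. g (insert t \<xi>))"
    unfolding cfg_meas2_pt_def split_beta' by blast
qed

lemma cfg_meas2_pt_nn_integral:
  fixes F :: "'a::euclidean_space set \<Rightarrow> 'a set \<Rightarrow> 'a \<Rightarrow> ennreal"
  assumes F: "cfg_meas2_pt F"
  shows "cfg_meas2 (\<lambda>\<xi> \<zeta>. \<integral>\<^sup>+t. F \<xi> \<zeta> t \<partial>lborel)"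
  unfolding cfg_meas2_def split_beta'
  using F unfolding cfg_meas2_pt_def split_beta'
  by (intro allI lborel.borel_measurable_nn_integral[of "\<lambda>p t. F (cfg _ (fst p)) (cfg _ (snd p)) t", unfolded split_beta']) auto

lemma cfg_meas2_pt_integral:
  fixes F :: "'a::euclidean_space set \<Rightarrow> 'a set \<Rightarrow> 'a \<Rightarrow> complex"
  assumes F: "cfg_meas2_pt F"
  shows "cfg_meas2 (\<lambda>\<xi> \<zeta>. \<integral>t. F \<xi> \<zeta> t \<partial>lborel)"
  unfolding cfg_meas2_def split_beta'
  using F unfolding cfg_meas2_pt_def split_beta'
  by (intro allI lborel.borel_measurable_lebesgue_integral[of "\<lambda>p t. F (cfg _ (fst p)) (cfg _ (snd p)) t", unfolded split_beta']) auto

lemma cfg_meas_nn_integral_cfg: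
  fixes F :: "'a::euclidean_space set \<Rightarrow> 'a set \<Rightarrow> ennreal"
  assumes F: "cfg_meas2 F"
  shows "cfg_meas (\<lambda>\<xi>. \<integral>\<^sup>+z. F \<xi> (cfg m z) \<partial>PiL m)"
  unfolding cfg_meas_def
proof
  fix k
  show "(\<lambda>y. \<integral>\<^sup>+z. F (cfg k y) (cfg m z) \<partial>PiL m) \<in> borel_measurable (PiL k)"
    using sigma_finite_measure.borel_measurable_nn_integral[OF sigma_finite_PiL F[unfolded cfg_meas2_def, rule_format, of k m]]
    by simp
qed

lemma cfg_meas_pt_insert:
  fixes H :: "'a::euclidean_space set \<Rightarrow> 'a \<Rightarrow> 'b::topological_space"
  assumes H: "cfg_meas_pt H"
  shows "(\<lambda>(x, t). H (insert t (cfg n x)) t) \<in> borel_measurable (PiL n \<Otimes>\<^sub>M (lborel :: 'a measure))"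
proof -
  have "(\<lambda>p. H (chart_pt n p ` {..<Suc n}) (chart_pt n p n)) \<in> borel_measurable (PiL n \<Otimes>\<^sub>M lborel)"
    by (rule cfg_meas_pt_image[OF H, where u="\<lambda>i p. chart_pt n p i"]) (auto intro: measurable_chart_pt)
  then show ?thesis by (simp add: chart_pt_image split_beta')
qed

lemma cfg_meas_nn_integral_insert:
  fixes H :: "'a::euclidean_space set \<Rightarrow> 'a \<Rightarrow> ennreal"
  assumes H: "cfg_meas_pt H"
  shows "cfg_meas (\<lambda>\<xi>. \<integral>\<^sup>+t. H (insert t \<xi>) t \<partial>lborel)"
  unfolding cfg_meas_def
proof
  fix n
  show "(\<lambda>x. \<integral>\<^sup>+t. H (insert t (cfg n x)) t \<partial>lborel) \<in> borel_measurable (PiL n)"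
    using lborel.borel_measurable_nn_integral[OF cfg_meas_pt_insert[OF H, of n]] by simp
qed

lemma cfg_meas_pt_at:
  fixes H :: "'a::euclidean_space set \<Rightarrow> 'a \<Rightarrow> 'b::topological_space"
  assumes H: "cfg_meas_pt H" and i: "i < n"
  shows "(\<lambda>w. H (cfg n w) (w i)) \<in> borel_measurable (PiL n)"
proof -
  have "(\<lambda>w. H ((\<lambda>j. w j) ` {..<n}) (w i)) \<in> borel_measurable (PiL n)"
    by (rule cfg_meas_pt_image[OF H]) (use measurable_coordinate i in auto)
  then show ?thesis by (simp add: cfg_def)
qed

lemma cfg_meas_sum_Pow:
  fixes F :: "'a::euclidean_space set \<Rightarrow> 'a set \<Rightarrow> 'b::{second_countable_topology, topological_comm_monoid_add}"
  assumes F: "cfg_meas2 F"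
  shows "cfg_meas (\<lambda>\<eta>. \<Sum>\<xi>\<in>Pow \<eta>. F \<xi> (\<eta> - \<xi>))"
  unfolding cfg_meas_def
proof
  fix n
  have "(\<lambda>x. \<Sum>S\<in>Pow ((\<lambda>i. x i) ` {..<n}). F S ((\<lambda>i. x i) ` {..<n} - S)) \<in> borel_measurable (PiL n)"
  proof (rule measurable_sum_Pow_image[where \<Psi>'="\<lambda>I x. F (x ` I) (x ` ({..<n} - I))"])
    show "(\<lambda>x. F (x ` I) (x ` ({..<n} - I))) \<in> borel_measurable (PiL n)" if "I \<subseteq> {..<n}" for I
      using cfg_meas2_image[OF F, of I "{..<n} - I" "\<lambda>i x. x i"] that
      by (auto intro: measurable_coordinate finite_subset)
  qed (auto intro: measurable_coordinate simp: saturated_image_diff)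
  then show "(\<lambda>x. \<Sum>\<xi>\<in>Pow (cfg n x). F \<xi> (cfg n x - \<xi>)) \<in> borel_measurable (PiL n)"
    by (simp add: cfg_def)
qed

lemma measurable_Kinv_image:
  fixes u :: "nat \<Rightarrow> 'n \<Rightarrow> 'a::euclidean_space"
  assumes r: "rate_meas r" and A: "finite A" and B: "finite B"
    and u: "\<And>i. i \<in> A \<union> B \<Longrightarrow> u i \<in> borel_measurable N" and v: "v \<in> borel_measurable N"
    and P: "\<And>i. i \<in> B \<Longrightarrow> Measurable.pred N (P i)"
  shows "(\<lambda>\<omega>. Kinv (\<lambda>\<zeta>. r (v \<omega>) (\<zeta> \<union> (\<lambda>i. u i \<omega>) ` {i\<in>B. P i \<omega>})) ((\<lambda>i. u i \<omega>) ` A))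
    \<in> borel_measurable N"
proof -
  have fixed: "(\<lambda>\<omega>. Kinv (\<lambda>\<zeta>. r (v \<omega>) (\<zeta> \<union> (\<lambda>i. u i \<omega>) ` K)) ((\<lambda>i. u i \<omega>) ` A))
      \<in> borel_measurable N" if K: "K \<subseteq> B" for K
    unfolding Kinv_def
  proof (rule measurable_sum_Pow_image[OF A,
        where \<Psi>'="\<lambda>L \<omega>. (-1) ^ card ((\<lambda>i. u i \<omega>) ` (A - L)) * r (v \<omega>) ((\<lambda>i. u i \<omega>) ` (L \<union> K))"])
    fix L assume L: "L \<subseteq> A"
    have "finite (L \<union> K)" using L K A B by (auto intro: finite_subset)
    then show "(\<lambda>\<omega>. (-1) ^ card ((\<lambda>i. u i \<omega>) ` (A - L)) * r (v \<omega>) ((\<lambda>i. u i \<omega>) ` (L \<union> K)))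
        \<in> borel_measurable N"
      using A L K u by (intro borel_measurable_times measurable_card_image rate_meas_image[OF r _ _ v]) auto
  next
    fix \<omega> L assume "L \<subseteq> A" "saturated (\<lambda>i. u i \<omega>) A L"
    then show "(-1) ^ card ((\<lambda>i. u i \<omega>) ` A - (\<lambda>i. u i \<omega>) ` L) * r (v \<omega>) ((\<lambda>i. u i \<omega>) ` L \<union> (\<lambda>i. u i \<omega>) ` K)
        = (-1) ^ card ((\<lambda>i. u i \<omega>) ` (A - L)) * r (v \<omega>) ((\<lambda>i. u i \<omega>) ` (L \<union> K))"
      by (simp add: saturated_image_diff image_Un)
  qed (use u in auto)
  have "(\<lambda>\<omega>. (\<lambda>K \<omega>. Kinv (\<lambda>\<zeta>. r (v \<omega>) (\<zeta> \<union> (\<lambda>i. u i \<omega>) ` K)) ((\<lambda>i. u i \<omega>) ` A)) {i\<in>B. P i \<omega>} \<omega>)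
      \<in> borel_measurable N"
    by (rule measurable_select_subset[OF B P fixed])
  then show ?thesis by simp
qed

lemma cfg_meas_Dtot:
  assumes d: "rate_meas d"
  shows "cfg_meas (Dtot d)"
  unfolding cfg_meas_def
proof
  fix n
  have "(\<lambda>x. \<Sum>v\<in>(\<lambda>i. x i) ` {..<n}. d v ((\<lambda>i. x i) ` {..<n} - {v})) \<in> borel_measurable (PiL n)"
  proof (rule measurable_sum_image)
    fix i assume i: "i \<in> {..<n}"
    have "(\<lambda>x. d (x i) ((\<lambda>j. x j) ` {j\<in>{..<n}. x j \<noteq> x i})) \<in> borel_measurable (PiL n)"
    proof -
      have "(\<lambda>x. (\<lambda>J x. d (x i) ((\<lambda>j. x j) ` J)) {j\<in>{..<n}. x j \<noteq> x i} x) \<in> borel_measurable (PiL n)"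
      proof (rule measurable_select_subset)
        show "Measurable.pred (PiL n) (\<lambda>x. x j \<noteq> x i)" if "j \<in> {..<n}" for j
          using that i by (intro pred_eq_points(2) measurable_coordinate)
        show "(\<lambda>x. d (x i) ((\<lambda>j. x j) ` J)) \<in> borel_measurable (PiL n)" if "J \<subseteq> {..<n}" for J
          using that i by (intro rate_meas_image[OF d] measurable_coordinate) (auto intro: finite_subset)
      qed simp
      then show ?thesis by simp
    qed
    moreover have "(\<lambda>j. x j) ` {..<n} - {x i} = (\<lambda>j. x j) ` {j\<in>{..<n}. x j \<noteq> x i}" for x :: "nat \<Rightarrow> 'a"
      by auto
    ultimately show "(\<lambda>x. d (x i) ((\<lambda>i. x i) ` {..<n} - {x i})) \<in> borel_measurable (PiL n)"
      by simp
  qed (auto intro: measurable_coordinate)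
  then show "(\<lambda>x. Dtot d (cfg n x)) \<in> borel_measurable (PiL n)"
    by (simp add: Dtot_def cfg_def)
qed

lemma cfg_meas2_death_kernel:
  fixes r :: "'a::euclidean_space \<Rightarrow> 'a set \<Rightarrow> real" and \<phi> :: "real \<Rightarrow> real"
  assumes r: "rate_meas r" and \<phi>: "\<phi> \<in> borel_measurable borel"
  shows "cfg_meas2 (\<lambda>\<xi> \<zeta>. \<Sum>y\<in>\<xi>. \<phi> (Kinv (\<lambda>\<zeta>'. r y (\<zeta>' \<union> (\<xi> - {y}))) \<zeta>))"
  unfolding cfg_meas2_def
proof (intro allI)
  fix k m
  let ?M = "PiL k \<Otimes>\<^sub>M PiL m :: ((nat \<Rightarrow> 'a) \<times> (nat \<Rightarrow> 'a)) measure"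
  let ?u = "\<lambda>i p. chart2 k p i"
  have u: "?u i \<in> borel_measurable ?M" if "i < k + m" for i
    using that by (rule measurable_chart2)
  have "(\<lambda>p. \<Sum>y\<in>(\<lambda>i. ?u i p) ` {..<k}. \<phi> (Kinv (\<lambda>\<zeta>'. r y (\<zeta>' \<union> ((\<lambda>i. ?u i p) ` {..<k} - {y})))
      ((\<lambda>i. ?u i p) ` {k..<k + m}))) \<in> borel_measurable ?M"
  proof (rule measurable_sum_image)
    fix i assume i: "i \<in> {..<k}"
    have K: "(\<lambda>p. Kinv (\<lambda>\<zeta>'. r (?u i p) (\<zeta>' \<union> (\<lambda>j. ?u j p) ` {j\<in>{..<k}. ?u j p \<noteq> ?u i p}))
        ((\<lambda>j. ?u j p) ` {k..<k + m})) \<in> borel_measurable ?M"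
      using i by (intro measurable_Kinv_image[OF r] u pred_eq_points(2)) auto
    have eq: "(\<lambda>j. ?u j p) ` {..<k} - {?u i p} = (\<lambda>j. ?u j p) ` {j\<in>{..<k}. ?u j p \<noteq> ?u i p}" for p
      by auto
    show "(\<lambda>p. \<phi> (Kinv (\<lambda>\<zeta>'. r (?u i p) (\<zeta>' \<union> ((\<lambda>i. ?u i p) ` {..<k} - {?u i p})))
        ((\<lambda>i. ?u i p) ` {k..<k + m}))) \<in> borel_measurable ?M"
      unfolding eq by (rule measurable_compose[OF K \<phi>])
  qed (use u in auto)
  then show "(\<lambda>(x, y). \<Sum>v\<in>cfg k x. \<phi> (Kinv (\<lambda>\<zeta>'. r v (\<zeta>' \<union> (cfg k x - {v}))) (cfg m y)))
      \<in> borel_measurable ?M"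
    by (simp add: chart2_image split_beta')
qed

lemma cfg_meas2_pt_birth_kernel:
  fixes r :: "'a::euclidean_space \<Rightarrow> 'a set \<Rightarrow> real"
  assumes r: "rate_meas r"
  shows "cfg_meas2_pt (\<lambda>\<xi> \<zeta> t. Kinv (\<lambda>\<zeta>'. r t (\<zeta>' \<union> \<xi>)) \<zeta>)"
  unfolding cfg_meas2_pt_def split_beta'
proof (intro allI)
  fix k m
  let ?u = "\<lambda>i q. chart2_pt k m q i"
  have "(\<lambda>q. Kinv (\<lambda>\<zeta>'. r (?u (k + m) q) (\<zeta>' \<union> (\<lambda>j. ?u j q) ` {j\<in>{..<k}. True}))
      ((\<lambda>j. ?u j q) ` {k..<k + m})) \<in> borel_measurable ((PiL k \<Otimes>\<^sub>M PiL m) \<Otimes>\<^sub>M lborel)"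
    by (rule measurable_Kinv_image[OF r]) (auto intro: measurable_chart2_pt)
  then show "(\<lambda>q. Kinv (\<lambda>\<zeta>'. r (snd q) (\<zeta>' \<union> cfg k (fst (fst q)))) (cfg m (snd (fst q))))
      \<in> borel_measurable ((PiL k \<Otimes>\<^sub>M PiL m) \<Otimes>\<^sub>M (lborel :: 'a measure))"
    by (simp only: simp_thms Collect_mem_eq chart2_pt_image)
qed

lemma cfg_meas_Kinv_fixed:
  fixes r :: "'a::euclidean_space \<Rightarrow> 'a set \<Rightarrow> real"
  assumes r: "rate_meas r" and S: "finite S"
  shows "cfg_meas (\<lambda>\<zeta>. Kinv (\<lambda>\<zeta>'. r y (\<zeta>' \<union> S)) \<zeta>)"
  using cfg_meas_pt_fix_pt[OF cfg_meas2_pt_fix[OF cfg_meas2_pt_birth_kernel[OF r] S], of y] .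

lemma measurable_LP_nn:
  fixes f :: "'n \<Rightarrow> 'a::euclidean_space set \<Rightarrow> ennreal"
  assumes f: "\<And>m. (\<lambda>q. f (fst q) (cfg m (snd q))) \<in> borel_measurable (N \<Otimes>\<^sub>M PiL m)"
  shows "(\<lambda>p. LP_nn (f p)) \<in> borel_measurable N"
  unfolding LP_nn_def
proof (rule borel_measurable_suminf_order)
  fix m
  have "(\<lambda>p. \<integral>\<^sup>+z. f p (cfg m z) \<partial>PiL m) \<in> borel_measurable N"
    using sigma_finite_measure.borel_measurable_nn_integral[OF sigma_finite_PiL, of "\<lambda>p z. f p (cfg m z)" N m] f[of m]
    by (simp add: split_beta')
  then show "(\<lambda>p. ennreal (1 / fact m) * (\<integral>\<^sup>+z. f p (cfg m z) \<partial>PiL m)) \<in> borel_measurable N"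
    by (intro borel_measurable_times_ennreal) auto
qed

definition rate_norm :: "real \<Rightarrow> ('a::euclidean_space \<Rightarrow> 'a set \<Rightarrow> real) \<Rightarrow> 'a set \<Rightarrow> 'a \<Rightarrow> ennreal" where
  "rate_norm C r \<omega> x = LP_nn (\<lambda>\<eta>. ennreal (\<bar>Kinv (\<lambda>\<zeta>. r x (\<zeta> \<union> (\<omega> - {x}))) \<eta>\<bar> * C ^ card \<eta>))"

lemma cfg_meas_pt_rate_norm:
  fixes r :: "'a::euclidean_space \<Rightarrow> 'a set \<Rightarrow> real" and C :: real
  assumes r: "rate_meas r"
  shows "cfg_meas_pt (rate_norm C r)"
  unfolding cfg_meas_pt_def rate_norm_def split_beta'
proof
  fix n
  let ?N = "PiL n \<Otimes>\<^sub>M lborel :: ((nat \<Rightarrow> 'a) \<times> 'a) measure"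
  show "(\<lambda>p. LP_nn (\<lambda>\<zeta>. ennreal (\<bar>Kinv (\<lambda>\<zeta>'. r (snd p) (\<zeta>' \<union> (cfg n (fst p) - {snd p}))) \<zeta>\<bar> * C ^ card \<zeta>)))
      \<in> borel_measurable ?N"
  proof (rule measurable_LP_nn)
    fix m
    let ?M = "?N \<Otimes>\<^sub>M (PiL m :: (nat \<Rightarrow> 'a) measure)"
    let ?u = "\<lambda>j q. chart_pt2 n q j"
    have u: "?u j \<in> borel_measurable ?M" if "j < Suc n + m" for j
      using that by (rule measurable_chart_pt2)
    have K: "(\<lambda>q. Kinv (\<lambda>\<zeta>'. r (?u n q) (\<zeta>' \<union> (\<lambda>j. ?u j q) ` {j\<in>{..<n}. ?u j q \<noteq> ?u n q}))
        ((\<lambda>j. ?u j q) ` {Suc n..<Suc n + m})) \<in> borel_measurable ?M"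
      by (intro measurable_Kinv_image[OF r] u pred_eq_points(2)) auto
    have c: "(\<lambda>q. C ^ card ((\<lambda>j. ?u j q) ` {Suc n..<Suc n + m})) \<in> borel_measurable ?M"
      by (rule measurable_card_image) (auto intro: u)
    have e: "(\<lambda>j. ?u j q) ` {j\<in>{..<n}. ?u j q \<noteq> ?u n q} = cfg n (fst (fst q)) - {snd (fst q)}" for q
    proof -
      have "(\<lambda>j. ?u j q) ` {j\<in>{..<n}. ?u j q \<noteq> ?u n q} = chart_pt2 n q ` {..<n} - {chart_pt2 n q n}"
        by auto
      then show ?thesis by (simp only: chart_pt2_image)
    qed
    have "(\<lambda>q. ennreal (\<bar>Kinv (\<lambda>\<zeta>'. r (snd (fst q)) (\<zeta>' \<union> (cfg n (fst (fst q)) - {snd (fst q)}))) (cfg m (snd q))\<bar>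
        * C ^ card (cfg m (snd q)))) \<in> borel_measurable ?M"
    proof -
      have "(\<lambda>q. Kinv (\<lambda>\<zeta>'. r (snd (fst q)) (\<zeta>' \<union> (cfg n (fst (fst q)) - {snd (fst q)}))) (cfg m (snd q)))
          \<in> borel_measurable ?M"
        using K[unfolded e] by (simp only: chart_pt2_image)
      moreover have "(\<lambda>q. C ^ card (cfg m (snd q))) \<in> borel_measurable ?M"
        using c by (simp only: chart_pt2_image)
      ultimately show ?thesis by measurable
    qed
    then show "(\<lambda>q. ennreal (\<bar>Kinv (\<lambda>\<zeta>'. r (snd (fst q)) (\<zeta>' \<union> (cfg n (fst (fst q)) - {snd (fst q)}))) (cfg m (snd q))\<bar>
        * C ^ card (cfg m (snd q)))) \<in> borel_measurable ?M" .
  qed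
qed

section \<open>Calculus of the Lebesgue--Poisson integral\<close>

lemma LP_mono:
  assumes "\<And>\<eta>. finite \<eta> \<Longrightarrow> f \<eta> \<le> g \<eta>"
  shows "LP_nn f \<le> LP_nn g"
  unfolding LP_nn_def
proof (rule suminf_le)
  fix n
  show "ennreal (1 / fact n) * (\<integral>\<^sup>+ x. f (cfg n x) \<partial>PiL n) \<le> ennreal (1 / fact n) * (\<integral>\<^sup>+ x. g (cfg n x) \<partial>PiL n)"
    by (intro mult_left_mono nn_integral_mono assms finite_cfg) simp
qed (rule summableI)+

lemma LP_cong:
  assumes "\<And>\<eta>. finite \<eta> \<Longrightarrow> f \<eta> = g \<eta>"
  shows "LP_nn f = LP_nn g"
  using LP_mono[of f g] LP_mono[of g f] assms by (simp add: antisym)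

lemma LP_cmult:
  fixes f :: "'a::euclidean_space set \<Rightarrow> ennreal"
  assumes f: "cfg_meas f"
  shows "LP_nn (\<lambda>\<eta>. c * f \<eta>) = c * LP_nn f"
proof -
  have "ennreal (1 / fact n) * (\<integral>\<^sup>+ x. c * f (cfg n x) \<partial>(PiL n :: (nat \<Rightarrow> 'a) measure)) = c * (ennreal (1 / fact n) * (\<integral>\<^sup>+ x. f (cfg n x) \<partial>PiL n))" for n
    using f unfolding cfg_meas_def by (simp add: nn_integral_cmult mult.left_commute)
  then show ?thesis unfolding LP_nn_def by simp
qed

lemma LP_add:
  fixes f g :: "'a::euclidean_space set \<Rightarrow> ennreal"
  assumes f: "cfg_meas f" and g: "cfg_meas g"
  shows "LP_nn (\<lambda>\<eta>. f \<eta> + g \<eta>) = LP_nn f + LP_nn g"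
proof -
  have "ennreal (1 / fact n) * (\<integral>\<^sup>+ x. f (cfg n x) + g (cfg n x) \<partial>(PiL n :: (nat \<Rightarrow> 'a) measure))
     = ennreal (1 / fact n) * (\<integral>\<^sup>+ x. f (cfg n x) \<partial>PiL n) + ennreal (1 / fact n) * (\<integral>\<^sup>+ x. g (cfg n x) \<partial>PiL n)" for n
    using f g unfolding cfg_meas_def by (simp add: nn_integral_add distrib_left)
  then show ?thesis unfolding LP_nn_def by (simp add: suminf_add[OF summableI summableI])
qed

lemma LP_sum:
  fixes f :: "'i \<Rightarrow> 'a::euclidean_space set \<Rightarrow> ennreal"
  assumes "finite S" "\<And>i. i \<in> S \<Longrightarrow> cfg_meas (f i)"
  shows "LP_nn (\<lambda>\<eta>. \<Sum>i\<in>S. f i \<eta>) = (\<Sum>i\<in>S. LP_nn (f i))"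
  using assms
proof (induction S rule: finite_induct)
  case empty
  then show ?case by (simp add: LP_nn_def)
next
  case (insert x F)
  have "LP_nn (\<lambda>\<eta>. \<Sum>i\<in>insert x F. f i \<eta>) = LP_nn (\<lambda>\<eta>. f x \<eta> + (\<Sum>i\<in>F. f i \<eta>))"
    using insert by simp
  also have "\<dots> = LP_nn (f x) + LP_nn (\<lambda>\<eta>. \<Sum>i\<in>F. f i \<eta>)"
    using insert by (intro LP_add cfg_meas_sum) auto
  finally show ?case using insert by simp
qed

lemma LP_nn_split_empty:
  fixes f :: "'a::euclidean_space set \<Rightarrow> ennreal"
  shows "LP_nn f = f {} + LP_nn (\<lambda>\<eta>. if \<eta> = {} then 0 else f \<eta>)"
proof -
  define a where "a n = ennreal (1 / fact n) * (\<integral>\<^sup>+ x. f (cfg n x) \<partial>(PiL n :: (nat \<Rightarrow> 'a) measure))" for n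
  define b where "b n = ennreal (1 / fact n) * (\<integral>\<^sup>+ x. (if cfg n x = {} then 0 else f (cfg n x)) \<partial>(PiL n :: (nat \<Rightarrow> 'a) measure))" for n
  have ab: "a n = b n + (if n = 0 then f {} else 0)" for n
  proof (cases n)
    case 0
    then show ?thesis unfolding a_def b_def by (simp add: PiM_empty)
  next
    case (Suc m)
    then show ?thesis unfolding a_def b_def by (simp add: cfg_nonempty)
  qed
  have s1: "(\<lambda>n. if n = 0 then f {} else 0) sums f {}"
    using sums_single[of 0 "\<lambda>_. f {}"] by simp
  have "LP_nn f = (\<Sum>n. a n)" unfolding LP_nn_def a_def ..
  also have "\<dots> = (\<Sum>n. b n) + (\<Sum>n. (if n = 0 then f {} else 0))"
    unfolding ab by (rule suminf_add[OF summableI summableI, symmetric])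
  also have "(\<Sum>n. (if n = 0 then f {} else 0)) = f {}" using sums_unique[OF s1] by simp
  also have "(\<Sum>n. b n) = LP_nn (\<lambda>\<eta>. if \<eta> = {} then 0 else f \<eta>)" unfolding LP_nn_def b_def ..
  finally show ?thesis by (simp add: add.commute)
qed

lemma AE_PiL_diagonal:
  assumes ij: "i < n" "j < n" "i \<noteq> j"
  shows "AE w in (PiL n :: (nat \<Rightarrow> 'a::euclidean_space) measure). w i \<noteq> w j"
proof -
  interpret product_sigma_finite "\<lambda>_::nat. lborel::'a measure" by (rule product_sigma_finite_lborel)
  define I where "I = {..<n} - {i}"
  have I: "finite I" "i \<notin> I" "insert i I = {..<n}" "j \<in> I" using ij unfolding I_def by auto
  define S where "S = {w \<in> space (PiL n :: (nat \<Rightarrow> 'a) measure). w i = w j}"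
  have S: "S \<in> sets (PiL n :: (nat \<Rightarrow> 'a) measure)"
    unfolding S_def by (rule measurable_equality_set) (use measurable_coordinate ij in auto)
  have mS: "indicator S \<in> borel_measurable (PiM (insert i I) (\<lambda>_. lborel::'a measure))"
    using S I(3) by simp
  have "emeasure (PiL n :: (nat \<Rightarrow> 'a) measure) S = (\<integral>\<^sup>+w. indicator S w \<partial>PiM (insert i I) (\<lambda>_. lborel::'a measure))"
    using S I(3) by simp
  also have "\<dots> = (\<integral>\<^sup>+w. (\<integral>\<^sup>+t. indicator S (w(i := t)) \<partial>lborel) \<partial>PiM I (\<lambda>_. lborel))"
    by (rule product_nn_integral_insert[OF I(1) I(2) mS])
  also have "\<dots> = (\<integral>\<^sup>+w. 0 \<partial>PiM I (\<lambda>_. lborel::'a measure))"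
  proof (rule nn_integral_cong)
    fix w assume w: "w \<in> space (PiM I (\<lambda>_. lborel::'a measure))"
    have "(\<integral>\<^sup>+t. indicator S (w(i := t)) \<partial>lborel) \<le> (\<integral>\<^sup>+t. indicator {w j} t \<partial>lborel)"
    proof (rule nn_integral_mono)
      fix t show "indicator S (w(i := t)) \<le> (indicator {w j} t :: ennreal)"
        using I(2,4) ij(3) unfolding S_def by (auto simp: indicator_def)
    qed
    also have "\<dots> = 0" by simp
    finally show "(\<integral>\<^sup>+t. indicator S (w(i := t)) \<partial>lborel) = 0" by simp
  qed
  also have "\<dots> = 0" by simp
  finally have "emeasure (PiL n :: (nat \<Rightarrow> 'a) measure) S = 0" .
  then show ?thesis
    using S by (intro AE_I[where N=S]) (auto simp: S_def)
qed

lemma AE_PiL_injective: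
  "AE w in (PiL n :: (nat \<Rightarrow> 'a::euclidean_space) measure). inj_on w {..<n}"
proof -
  have "AE w in (PiL n :: (nat \<Rightarrow> 'a) measure). \<forall>i\<in>{..<n}. \<forall>j\<in>{..<n}. i \<noteq> j \<longrightarrow> w i \<noteq> w j"
    by (intro AE_finite_allI) (use AE_PiL_diagonal in auto)
  then show ?thesis by eventually_elim (auto simp: inj_on_def)
qed

lemma nn_integral_PiM_relabel:
  fixes g :: "'a::euclidean_space set \<Rightarrow> ennreal"
  assumes "finite (J :: nat set)" "card J = k" "cfg_meas g"
  shows "(\<integral>\<^sup>+y. g (y ` J) \<partial>PiM J (\<lambda>_. lborel)) = (\<integral>\<^sup>+y. g (cfg k y) \<partial>(PiL k :: (nat \<Rightarrow> 'a) measure))"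
  using assms
proof (induction k arbitrary: J g)
  case 0
  then have "J = {}" by simp
  then show ?case by (simp add: cfg_def)
next
  case (Suc k)
  interpret product_sigma_finite "\<lambda>_::nat. lborel::'a measure" by (rule product_sigma_finite_lborel)
  have "J \<noteq> {}" using Suc.prems(2) by auto
  then obtain j where j: "j \<in> J" by blast
  define J' where "J' = J - {j}"
  have J: "J = insert j J'" "j \<notin> J'" "finite J'" "card J' = k" using j Suc.prems unfolding J'_def by auto
  have mg: "(\<lambda>y. g (y ` J)) \<in> borel_measurable (PiM (insert j J') (\<lambda>_. lborel::'a measure))"
    using cfg_meas_image[OF Suc.prems(3) Suc.prems(1), of "\<lambda>i y. y i"] measurable_coordinate[of _ "insert j J'"] J(1) by auto
  have "(\<integral>\<^sup>+y. g (y ` J) \<partial>PiM J (\<lambda>_. lborel)) = (\<integral>\<^sup>+y. g (y ` J) \<partial>PiM (insert j J') (\<lambda>_. lborel))"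
    using J(1) by simp
  also have "\<dots> = (\<integral>\<^sup>+y. (\<integral>\<^sup>+t. g ((y(j := t)) ` J) \<partial>lborel) \<partial>PiM J' (\<lambda>_. lborel))"
    by (rule product_nn_integral_insert[OF J(3) J(2) mg])
  also have "\<dots> = (\<integral>\<^sup>+y. (\<lambda>\<xi>. \<integral>\<^sup>+t. g (insert t \<xi>) \<partial>lborel) (y ` J') \<partial>PiM J' (\<lambda>_. lborel))"
  proof -
    have e: "(y(j := t)) ` J = insert t (y ` J')" for y t using J(1,2) by auto
    show ?thesis by (simp only: e)
  qed
  also have "\<dots> = (\<integral>\<^sup>+y. (\<lambda>\<xi>. \<integral>\<^sup>+t. g (insert t \<xi>) \<partial>lborel) (cfg k y) \<partial>(PiL k :: (nat \<Rightarrow> 'a) measure))"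
    by (rule Suc.IH[OF J(3) J(4) cfg_meas_nn_integral_insert[OF cfg_meas_pt_const[OF Suc.prems(3)]]])
  also have "\<dots> = (\<integral>\<^sup>+y. (\<integral>\<^sup>+t. g (cfg (Suc k) (y(k := t))) \<partial>lborel) \<partial>(PiL k :: (nat \<Rightarrow> 'a) measure))"
    by (simp add: cfg_Suc_upd)
  also have "\<dots> = (\<integral>\<^sup>+w. g (cfg (Suc k) w) \<partial>PiM (insert k {..<k}) (\<lambda>_. lborel::'a measure))"
  proof (rule product_nn_integral_insert[symmetric])
    show "(\<lambda>w. g (cfg (Suc k) w)) \<in> borel_measurable (PiM (insert k {..<k}) (\<lambda>_. lborel::'a measure))"
      using Suc.prems(3) unfolding cfg_meas_def by (simp add: lessThan_Suc[symmetric])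
  qed auto
  also have "\<dots> = (\<integral>\<^sup>+w. g (cfg (Suc k) w) \<partial>(PiL (Suc k) :: (nat \<Rightarrow> 'a) measure))"
    by (simp add: lessThan_Suc)
  finally show ?case .
qed

lemma nn_integral_PiL_pick_point:
  fixes H :: "'a::euclidean_space set \<Rightarrow> 'a \<Rightarrow> ennreal"
  assumes g: "cfg_meas_pt H" and i: "i < Suc k"
  shows "(\<integral>\<^sup>+w. H (cfg (Suc k) w) (w i) \<partial>(PiL (Suc k) :: (nat \<Rightarrow> 'a) measure))
       = (\<integral>\<^sup>+y. (\<integral>\<^sup>+t. H (insert t (cfg k y)) t \<partial>lborel) \<partial>(PiL k :: (nat \<Rightarrow> 'a) measure))"
proof -
  interpret product_sigma_finite "\<lambda>_::nat. lborel::'a measure" by (rule product_sigma_finite_lborel)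
  define I where "I = {..<Suc k} - {i}"
  have I: "finite I" "i \<notin> I" "insert i I = {..<Suc k}" "card I = k" using i unfolding I_def by auto
  have m: "(\<lambda>w. H (cfg (Suc k) w) (w i)) \<in> borel_measurable (PiM (insert i I) (\<lambda>_. lborel::'a measure))"
    using cfg_meas_pt_at[OF g i] I(3) by simp
  have "(\<integral>\<^sup>+w. H (cfg (Suc k) w) (w i) \<partial>(PiL (Suc k) :: (nat \<Rightarrow> 'a) measure))
      = (\<integral>\<^sup>+w. H (cfg (Suc k) w) (w i) \<partial>(PiM (insert i I) (\<lambda>_. lborel::'a measure)))"
    using I(3) by simp
  also have "\<dots> = (\<integral>\<^sup>+w. (\<integral>\<^sup>+t. H (cfg (Suc k) (w(i := t))) ((w(i := t)) i) \<partial>lborel) \<partial>PiM I (\<lambda>_. lborel))"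
    by (rule product_nn_integral_insert[OF I(1) I(2) m])
  also have "\<dots> = (\<integral>\<^sup>+w. (\<lambda>\<xi>. \<integral>\<^sup>+t. H (insert t \<xi>) t \<partial>lborel) (w ` I) \<partial>PiM I (\<lambda>_. lborel))"
  proof -
    have e: "cfg (Suc k) (w(i := t)) = insert t (w ` I)" for w t
    proof -
      have a: "(w(i := t)) ` I = w ` I" using I(2) by auto
      have "cfg (Suc k) (w(i := t)) = (w(i := t)) ` insert i I" unfolding cfg_def I(3) ..
      also have "\<dots> = insert t (w ` I)" by (simp only: image_insert fun_upd_same a)
      finally show ?thesis .
    qed
    show ?thesis by (simp add: e)
  qed
  also have "\<dots> = (\<integral>\<^sup>+y. (\<lambda>\<xi>. \<integral>\<^sup>+t. H (insert t \<xi>) t \<partial>lborel) (cfg k y) \<partial>(PiL k :: (nat \<Rightarrow> 'a) measure))"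
    by (rule nn_integral_PiM_relabel[OF I(1) I(4) cfg_meas_nn_integral_insert[OF g]])
  finally show ?thesis by simp
qed

lemma ennreal_inverse_fact_Suc:
  "ennreal (1 / fact (Suc k)) * (of_nat (Suc k) * V) = ennreal (1 / fact k) * V"
proof -
  have "ennreal (1 / fact (Suc k)) * of_nat (Suc k) = ennreal (1 / fact (Suc k) * real (Suc k))"
    by (subst ennreal_of_nat_eq_real_of_nat) (rule ennreal_mult[symmetric]; simp)
  also have "1 / fact (Suc k) * real (Suc k) = 1 / fact k"
    by (simp add: fact_Suc del: of_nat_Suc)
  finally show ?thesis by (metis mult.assoc)
qed

lemma LP_mecke:
  fixes H :: "'a::euclidean_space set \<Rightarrow> 'a \<Rightarrow> ennreal"
  assumes g: "cfg_meas_pt H"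
  shows "LP_nn (\<lambda>\<xi>. \<integral>\<^sup>+t. H (insert t \<xi>) t \<partial>lborel) = LP_nn (\<lambda>\<omega>. \<Sum>t\<in>\<omega>. H \<omega> t)"
proof -
  define V where "V k = (\<integral>\<^sup>+y. (\<integral>\<^sup>+t. H (insert t (cfg k y)) t \<partial>lborel) \<partial>(PiL k :: (nat \<Rightarrow> 'a) measure))" for k
  define r where "r n = ennreal (1 / fact n) * (\<integral>\<^sup>+w. (\<Sum>t\<in>cfg n w. H (cfg n w) t) \<partial>(PiL n :: (nat \<Rightarrow> 'a) measure))" for n
  have rS: "r (Suc k) = ennreal (1 / fact k) * V k" for k
  proof -
    have "(\<integral>\<^sup>+w. (\<Sum>t\<in>cfg (Suc k) w. H (cfg (Suc k) w) t) \<partial>(PiL (Suc k) :: (nat \<Rightarrow> 'a) measure))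
        = (\<integral>\<^sup>+w. (\<Sum>i\<in>{..<Suc k}. H (cfg (Suc k) w) (w i)) \<partial>(PiL (Suc k) :: (nat \<Rightarrow> 'a) measure))"
    proof (rule nn_integral_cong_AE)
      show "AE w in (PiL (Suc k) :: (nat \<Rightarrow> 'a) measure). (\<Sum>t\<in>cfg (Suc k) w. H (cfg (Suc k) w) t) = (\<Sum>i\<in>{..<Suc k}. H (cfg (Suc k) w) (w i))"
        using AE_PiL_injective[of "Suc k"] by eventually_elim (simp add: cfg_def sum.reindex)
    qed
    also have "\<dots> = (\<Sum>i\<in>{..<Suc k}. (\<integral>\<^sup>+w. H (cfg (Suc k) w) (w i) \<partial>(PiL (Suc k) :: (nat \<Rightarrow> 'a) measure)))"
      by (rule nn_integral_sum) (use cfg_meas_pt_at[OF g] in auto)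
    also have "\<dots> = (\<Sum>i\<in>{..<Suc k}. V k)"
      unfolding V_def by (rule sum.cong[OF refl]) (use nn_integral_PiL_pick_point[OF g] in auto)
    also have "\<dots> = of_nat (Suc k) * V k" by simp
    finally show ?thesis unfolding r_def by (simp only: ennreal_inverse_fact_Suc)
  qed
  have "LP_nn (\<lambda>\<xi>. \<integral>\<^sup>+t. H (insert t \<xi>) t \<partial>lborel) = (\<Sum>k. ennreal (1 / fact k) * V k)"
    unfolding LP_nn_def V_def ..
  also have "\<dots> = (\<Sum>k. r (Suc k))" by (simp add: rS)
  also have "\<dots> = (\<Sum>k. r (Suc k)) + r 0" by (simp add: r_def cfg_def)
  also have "\<dots> = (\<Sum>n. r n)"
    using sums_unique[OF sums_Suc[OF summable_sums[OF summableI[of "\<lambda>k. r (Suc k)"]]]] by simp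
  also have "\<dots> = LP_nn (\<lambda>\<omega>. \<Sum>t\<in>\<omega>. H \<omega> t)" unfolding LP_nn_def r_def ..
  finally show ?thesis .
qed

lemma suminf_diagonal_le:
  fixes b :: "nat \<Rightarrow> nat \<Rightarrow> ennreal"
  shows "(\<Sum>n. \<Sum>k\<le>n. b k (n - k)) \<le> (\<Sum>k. \<Sum>m. b k m)"
proof (rule suminf_le_const[OF summableI])
  fix N
  have "(\<Sum>n<N. \<Sum>k\<le>n. b k (n - k)) = (\<Sum>(k, m)\<in>{(k, m). k + m < N}. b k m)"
    by (rule sum.triangle_reindex[symmetric])
  also have "\<dots> \<le> (\<Sum>(k, m)\<in>{..<N} \<times> {..<N}. b k m)"
    by (rule sum_mono2) auto
  also have "\<dots> = (\<Sum>k<N. \<Sum>m<N. b k m)"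
    by (rule sum.cartesian_product[symmetric])
  also have "\<dots> \<le> (\<Sum>k<N. \<Sum>m. b k m)"
    by (intro sum_mono sum_le_suminf[OF summableI]) auto
  also have "\<dots> \<le> (\<Sum>k. \<Sum>m. b k m)"
    by (intro sum_le_suminf[OF summableI]) auto
  finally show "(\<Sum>n<N. \<Sum>k\<le>n. b k (n - k)) \<le> (\<Sum>k. \<Sum>m. b k m)" .
qed

lemma nn_integral_PiL_split:
  fixes F :: "'a::euclidean_space set \<Rightarrow> 'a set \<Rightarrow> ennreal"
  assumes F: "cfg_meas2 F" and I: "I \<subseteq> {..<n}"
  shows "(\<integral>\<^sup>+x. F (x ` I) (x ` ({..<n} - I)) \<partial>(PiL n :: (nat \<Rightarrow> 'a) measure))
    = (\<integral>\<^sup>+y. (\<integral>\<^sup>+z. F (cfg (card I) y) (cfg (n - card I) z) \<partial>(PiL (n - card I) :: (nat \<Rightarrow> 'a) measure)) \<partial>(PiL (card I) :: (nat \<Rightarrow> 'a) measure))"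
proof -
  interpret product_sigma_finite "\<lambda>_::nat. lborel::'a measure" by (rule product_sigma_finite_lborel)
  define J where "J = {..<n} - I"
  have IJ: "I \<inter> J = {}" "finite I" "finite J" "I \<union> J = {..<n}" "card J = n - card I"
  proof -
    have fI: "finite I" using I finite_subset by blast
    have "card J = card {..<n} - card I" unfolding J_def by (rule card_Diff_subset[OF fI I])
    then show "I \<inter> J = {}" "finite I" "finite J" "I \<union> J = {..<n}" "card J = n - card I"
      using I fI unfolding J_def by auto
  qed
  have m: "(\<lambda>x. F (x ` I) (x ` J)) \<in> borel_measurable (PiM (I \<union> J) (\<lambda>_. lborel::'a measure))"
    using cfg_meas2_image[OF F IJ(2) IJ(3), of "\<lambda>i x. x i"] measurable_coordinate[of _ "I \<union> J"] by auto
  have "(\<integral>\<^sup>+x. F (x ` I) (x ` ({..<n} - I)) \<partial>(PiL n :: (nat \<Rightarrow> 'a) measure))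
      = (\<integral>\<^sup>+x. F (x ` I) (x ` J) \<partial>(PiM (I \<union> J) (\<lambda>_. lborel::'a measure)))"
    unfolding J_def[symmetric] IJ(4) ..
  also have "\<dots> = (\<integral>\<^sup>+y. (\<integral>\<^sup>+z. F ((merge I J (y, z)) ` I) ((merge I J (y, z)) ` J) \<partial>PiM J (\<lambda>_. lborel)) \<partial>PiM I (\<lambda>_. lborel))"
    by (rule product_nn_integral_fold[OF IJ(1-3) m])
  also have "\<dots> = (\<integral>\<^sup>+y. (\<integral>\<^sup>+z. F (y ` I) (z ` J) \<partial>PiM J (\<lambda>_. lborel)) \<partial>PiM I (\<lambda>_. lborel::'a measure))"
  proof -
    have e1: "(merge I J (y, z)) ` I = y ` I" for y z :: "nat \<Rightarrow> 'a" by (auto simp: merge_def)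
    have e2: "(merge I J (y, z)) ` J = z ` J" for y z :: "nat \<Rightarrow> 'a" using IJ(1) by (auto simp: merge_def)
    show ?thesis by (simp only: e1 e2)
  qed
  also have "\<dots> = (\<integral>\<^sup>+y. (\<integral>\<^sup>+z. F (y ` I) (cfg (n - card I) z) \<partial>(PiL (n - card I) :: (nat \<Rightarrow> 'a) measure)) \<partial>PiM I (\<lambda>_. lborel::'a measure))"
  proof (rule nn_integral_cong)
    fix y :: "nat \<Rightarrow> 'a"
    show "(\<integral>\<^sup>+z. F (y ` I) (z ` J) \<partial>PiM J (\<lambda>_. lborel)) = (\<integral>\<^sup>+z. F (y ` I) (cfg (n - card I) z) \<partial>(PiL (n - card I) :: (nat \<Rightarrow> 'a) measure))"
      by (rule nn_integral_PiM_relabel[OF IJ(3) IJ(5) cfg_meas2_fix[OF F]]) (use IJ(2) in auto)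
  qed
  also have "\<dots> = (\<integral>\<^sup>+y. (\<integral>\<^sup>+z. F (cfg (card I) y) (cfg (n - card I) z) \<partial>(PiL (n - card I) :: (nat \<Rightarrow> 'a) measure)) \<partial>(PiL (card I) :: (nat \<Rightarrow> 'a) measure))"
    by (rule nn_integral_PiM_relabel[OF IJ(2) refl cfg_meas_nn_integral_cfg[OF F]])
  finally show ?thesis .
qed

lemma sum_Pow_by_card:
  fixes h :: "nat \<Rightarrow> ennreal"
  assumes N: "finite N"
  shows "(\<Sum>I\<in>Pow N. h (card I)) = (\<Sum>k\<in>{..card N}. of_nat (card N choose k) * h k)"
proof -
  have "(\<Sum>I\<in>Pow N. h (card I)) = (\<Sum>k\<in>{..card N}. \<Sum>I\<in>{I. I \<in> Pow N \<and> card I = k}. h (card I))"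
    by (rule sum.group[symmetric]) (use N in \<open>auto intro: card_mono\<close>)
  also have "\<dots> = (\<Sum>k\<in>{..card N}. of_nat (card N choose k) * h k)"
  proof (rule sum.cong[OF refl])
    fix k
    have "(\<Sum>I\<in>{I. I \<in> Pow N \<and> card I = k}. h (card I)) = (\<Sum>I\<in>{I. I \<in> Pow N \<and> card I = k}. h k)"
      by (rule sum.cong) auto
    also have "\<dots> = of_nat (card {I. I \<in> Pow N \<and> card I = k}) * h k" by simp
    also have "card {I. I \<in> Pow N \<and> card I = k} = card N choose k"
      using n_subsets[OF N, of k] by simp
    finally show "(\<Sum>I\<in>{I. I \<in> Pow N \<and> card I = k}. h (card I)) = of_nat (card N choose k) * h k" .
  qed
  finally show ?thesis .
qed

lemma ennreal_binomial_fact: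
  assumes "k \<le> n"
  shows "ennreal (1 / fact n) * (of_nat (n choose k) * X) = ennreal (1 / fact k) * (ennreal (1 / fact (n - k)) * X)"
proof -
  have r: "1 / fact n * real (n choose k) = 1 / fact k * (1 / fact (n - k))"
    using binomial_fact[OF assms, where 'a=real] by (simp add: field_simps)
  have "ennreal (1 / fact n) * of_nat (n choose k) = ennreal (1 / fact n * real (n choose k))"
  proof -
    have "of_nat (n choose k) = ennreal (real (n choose k))" by (rule ennreal_of_nat_eq_real_of_nat)
    then show ?thesis by (simp only:) (rule ennreal_mult[symmetric], auto)
  qed
  also have "\<dots> = ennreal (1 / fact k) * ennreal (1 / fact (n - k))"
    unfolding r by (rule ennreal_mult) auto
  finally show ?thesis by (metis mult.assoc)
qed

text \<open>For a possibly non-injective chart, the subsets of the configuration are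
  dominated by the subsets of the index set.\<close>
lemma sum_Pow_image_le:
  fixes F :: "'a set \<Rightarrow> 'a set \<Rightarrow> ennreal"
  assumes N: "finite N"
  shows "(\<Sum>\<xi>\<in>Pow (x ` N). F \<xi> (x ` N - \<xi>)) \<le> (\<Sum>I\<in>Pow N. F (x ` I) (x ` (N - I)))"
proof -
  have "(\<Sum>\<xi>\<in>Pow (x ` N). F \<xi> (x ` N - \<xi>)) = (\<Sum>I\<in>Pow N. if saturated x N I then F (x ` I) (x ` N - x ` I) else 0)"
    by (rule sum_Pow_image[OF N])
  also have "\<dots> \<le> (\<Sum>I\<in>Pow N. F (x ` I) (x ` (N - I)))"
  proof (rule sum_mono)
    fix I assume "I \<in> Pow N"
    then show "(if saturated x N I then F (x ` I) (x ` N - x ` I) else 0) \<le> F (x ` I) (x ` (N - I))"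
      using saturated_image_diff[of x N I] by auto
  qed
  finally show ?thesis .
qed

lemma nn_integral_LP_nn:
  fixes f :: "'b \<Rightarrow> 'a::euclidean_space set \<Rightarrow> ennreal"
  assumes M: "sigma_finite_measure M"
    and f: "\<And>m. (\<lambda>(t, z). f t (cfg m z)) \<in> borel_measurable (M \<Otimes>\<^sub>M PiL m)"
  shows "(\<integral>\<^sup>+t. LP_nn (f t) \<partial>M) = (\<Sum>m. ennreal (1 / fact m) * (\<integral>\<^sup>+t. (\<integral>\<^sup>+z. f t (cfg m z) \<partial>PiL m) \<partial>M))"
proof -
  have meas: "(\<lambda>t. \<integral>\<^sup>+z. f t (cfg m z) \<partial>PiL m) \<in> borel_measurable M" for m
    using sigma_finite_measure.borel_measurable_nn_integral[OF sigma_finite_PiL f[of m]] by simp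
  have "(\<integral>\<^sup>+t. LP_nn (f t) \<partial>M) = (\<Sum>m. \<integral>\<^sup>+t. ennreal (1 / fact m) * (\<integral>\<^sup>+z. f t (cfg m z) \<partial>PiL m) \<partial>M)"
    unfolding LP_nn_def by (rule nn_integral_suminf) (use meas in measurable)
  also have "\<dots> = (\<Sum>m. ennreal (1 / fact m) * (\<integral>\<^sup>+t. (\<integral>\<^sup>+z. f t (cfg m z) \<partial>PiL m) \<partial>M))"
    using meas by (simp add: nn_integral_cmult)
  finally show ?thesis .
qed

lemma LP_nn_integral_swap:
  fixes f :: "'a::euclidean_space set \<Rightarrow> 'a \<Rightarrow> ennreal"
  assumes f: "cfg_meas_pt f"
  shows "LP_nn (\<lambda>\<zeta>. \<integral>\<^sup>+t. f \<zeta> t \<partial>lborel) = (\<integral>\<^sup>+t. LP_nn (\<lambda>\<zeta>. f \<zeta> t) \<partial>lborel)"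
proof -
  have f': "(\<lambda>(t, z). f (cfg m z) t) \<in> borel_measurable (lborel \<Otimes>\<^sub>M PiL m)" for m
    using f[unfolded cfg_meas_pt_def, rule_format, of m]
      measurable_pair_swap_iff[of "\<lambda>(t, z). f (cfg m z) t" "lborel :: 'a measure" "PiL m"]
    by (simp add: split_beta')
  have swap: "(\<integral>\<^sup>+z. (\<integral>\<^sup>+t. f (cfg m z) t \<partial>lborel) \<partial>PiL m)
      = (\<integral>\<^sup>+t. (\<integral>\<^sup>+z. f (cfg m z) t \<partial>PiL m) \<partial>lborel)" for m
  proof -
    interpret pair_sigma_finite "PiL m :: (nat \<Rightarrow> 'a) measure" "lborel :: 'a measure"
      unfolding pair_sigma_finite_def using sigma_finite_PiL lborel.sigma_finite_measure_axioms by blast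
    show ?thesis
      by (rule Fubini'[symmetric]) (use f[unfolded cfg_meas_pt_def, rule_format, of m] in simp)
  qed
  have "LP_nn (\<lambda>\<zeta>. \<integral>\<^sup>+t. f \<zeta> t \<partial>lborel)
      = (\<Sum>m. ennreal (1 / fact m) * (\<integral>\<^sup>+t. (\<integral>\<^sup>+z. f (cfg m z) t \<partial>PiL m) \<partial>lborel))"
    unfolding LP_nn_def swap ..
  also have "\<dots> = (\<integral>\<^sup>+t. LP_nn (\<lambda>\<zeta>. f \<zeta> t) \<partial>lborel)"
    by (rule nn_integral_LP_nn[OF lborel.sigma_finite_measure_axioms f', symmetric])
  finally show ?thesis .
qed

text \<open>Splitting a chart point of n coordinates in all possible ways into k and
  n - k coordinates; the weights 1/n! turn into 1/k! * 1/(n-k)!.\<close>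
lemma chart_split_le:
  fixes F :: "'a::euclidean_space set \<Rightarrow> 'a set \<Rightarrow> ennreal"
  assumes F: "cfg_meas2 F"
  shows "ennreal (1 / fact n) * (\<integral>\<^sup>+x. (\<Sum>\<xi>\<in>Pow (cfg n x). F \<xi> (cfg n x - \<xi>)) \<partial>(PiL n :: (nat \<Rightarrow> 'a) measure))
    \<le> (\<Sum>k\<le>n. ennreal (1 / fact k) * (ennreal (1 / fact (n - k)) *
        (\<integral>\<^sup>+y. (\<integral>\<^sup>+z. F (cfg k y) (cfg (n - k) z) \<partial>PiL (n - k)) \<partial>PiL k)))"
proof -
  define a where "a k m = (\<integral>\<^sup>+y. (\<integral>\<^sup>+z. F (cfg k y) (cfg m z) \<partial>(PiL m :: (nat \<Rightarrow> 'a) measure)) \<partial>PiL k)" for k m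
  have meas: "(\<lambda>x. F (x ` I) (x ` ({..<n} - I))) \<in> borel_measurable (PiL n :: (nat \<Rightarrow> 'a) measure)"
    if "I \<in> Pow {..<n}" for I
    using cfg_meas2_image[OF F, of I "{..<n} - I" "\<lambda>i x. x i"] that
    by (auto intro: measurable_coordinate finite_subset)
  have "(\<integral>\<^sup>+x. (\<Sum>\<xi>\<in>Pow (cfg n x). F \<xi> (cfg n x - \<xi>)) \<partial>(PiL n :: (nat \<Rightarrow> 'a) measure))
      \<le> (\<integral>\<^sup>+x. (\<Sum>I\<in>Pow {..<n}. F (x ` I) (x ` ({..<n} - I))) \<partial>PiL n)"
    by (rule nn_integral_mono) (simp only: cfg_def sum_Pow_image_le[OF finite_lessThan])
  also have "\<dots> = (\<Sum>I\<in>Pow {..<n}. (\<integral>\<^sup>+x. F (x ` I) (x ` ({..<n} - I)) \<partial>PiL n))"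
    by (rule nn_integral_sum) (rule meas)
  also have "\<dots> = (\<Sum>I\<in>Pow {..<n}. a (card I) (n - card I))"
    unfolding a_def by (rule sum.cong[OF refl]) (rule nn_integral_PiL_split[OF F], auto)
  also have "\<dots> = (\<Sum>k\<in>{..n}. of_nat (n choose k) * a k (n - k))"
    using sum_Pow_by_card[OF finite_lessThan[of n], of "\<lambda>k. a k (n - k)"] by simp
  finally have "ennreal (1 / fact n) * (\<integral>\<^sup>+x. (\<Sum>\<xi>\<in>Pow (cfg n x). F \<xi> (cfg n x - \<xi>)) \<partial>PiL n)
      \<le> ennreal (1 / fact n) * (\<Sum>k\<in>{..n}. of_nat (n choose k) * a k (n - k))"
    by (rule mult_left_mono) simp
  also have "\<dots> = (\<Sum>k\<le>n. ennreal (1 / fact k) * (ennreal (1 / fact (n - k)) * a k (n - k)))"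
    unfolding sum_distrib_left by (rule sum.cong[OF refl]) (simp add: ennreal_binomial_fact)
  finally show ?thesis unfolding a_def .
qed

lemma LP_split_le:
  fixes F :: "'a::euclidean_space set \<Rightarrow> 'a set \<Rightarrow> ennreal"
  assumes F: "cfg_meas2 F"
  shows "LP_nn (\<lambda>\<eta>. \<Sum>\<xi>\<in>Pow \<eta>. F \<xi> (\<eta> - \<xi>)) \<le> LP_nn (\<lambda>\<xi>. LP_nn (F \<xi>))"
proof -
  define b where "b k m = ennreal (1 / fact k) * (ennreal (1 / fact m) *
      (\<integral>\<^sup>+y. (\<integral>\<^sup>+z. F (cfg k y) (cfg m z) \<partial>(PiL m :: (nat \<Rightarrow> 'a) measure)) \<partial>PiL k))" for k m
  have "LP_nn (\<lambda>\<eta>. \<Sum>\<xi>\<in>Pow \<eta>. F \<xi> (\<eta> - \<xi>)) \<le> (\<Sum>n. \<Sum>k\<le>n. b k (n - k))"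
    unfolding LP_nn_def b_def by (rule suminf_le[OF chart_split_le[OF F] summableI summableI])
  also have "\<dots> \<le> (\<Sum>k. \<Sum>m. b k m)" by (rule suminf_diagonal_le)
  also have "\<dots> = LP_nn (\<lambda>\<xi>. LP_nn (F \<xi>))"
  proof -
    have "(\<lambda>(y, z). F (cfg k y) (cfg m z)) \<in> borel_measurable (PiL k \<Otimes>\<^sub>M PiL m)" for k m
      using F unfolding cfg_meas2_def by blast
    then show ?thesis
      unfolding LP_nn_def[of "\<lambda>\<xi>. LP_nn (F \<xi>)"] b_def
      by (simp add: nn_integral_LP_nn[OF sigma_finite_PiL])
  qed
  finally show ?thesis .
qed

lemma LP_ae_of_finite:
  fixes B :: "'a::euclidean_space set \<Rightarrow> ennreal"
  assumes B: "cfg_meas B" and fin: "LP_nn B < \<infinity>"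
    and inf: "\<And>\<eta>. finite \<eta> \<Longrightarrow> \<not> P \<eta> \<Longrightarrow> B \<eta> = \<infinity>"
  shows "LP_ae P"
proof -
  obtain L where L: "LP_nn B = ennreal L" "0 \<le> L"
    using fin by (cases "LP_nn B") auto
  have "LP_nn (\<lambda>\<eta>. if P \<eta> then 0 else 1) \<le> 0 + ennreal e" if e: "0 < e" for e
  proof -
    define e' where "e' = e / (L + 1)"
    have e': "0 < e'" "e' * L \<le> e"
      using e L unfolding e'_def by (auto simp: field_simps)
    have "LP_nn (\<lambda>\<eta>. if P \<eta> then 0 else 1) \<le> LP_nn (\<lambda>\<eta>. ennreal e' * B \<eta>)"
      using inf e'(1) by (intro LP_mono) (auto simp: ennreal_mult_top)
    also have "\<dots> = ennreal (e' * L)"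
      using L e'(1) by (simp add: LP_cmult[OF B] ennreal_mult)
    also have "\<dots> \<le> 0 + ennreal e" using e'(2) by (simp add: ennreal_leI)
    finally show ?thesis .
  qed
  then have "LP_nn (\<lambda>\<eta>. if P \<eta> then 0 else 1) \<le> 0"
    by (rule ennreal_le_epsilon) auto
  then show ?thesis unfolding LP_ae_def by simp
qed

section \<open>The operator L_1\<close>

definition death_kernel :: "('a \<Rightarrow> 'a set \<Rightarrow> real) \<Rightarrow> 'a set \<Rightarrow> 'a set \<Rightarrow> real" where
  "death_kernel d \<xi> \<zeta> = (\<Sum>y\<in>\<xi>. Kinv (\<lambda>\<zeta>'. d y (\<zeta>' \<union> (\<xi> - {y}))) \<zeta>)"

definition birth_kernel :: "('a \<Rightarrow> 'a set \<Rightarrow> real) \<Rightarrow> 'a set \<Rightarrow> 'a set \<Rightarrow> 'a \<Rightarrow> real" where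
  "birth_kernel b \<xi> \<zeta> t = Kinv (\<lambda>\<zeta>'. b t (\<zeta>' \<union> \<xi>)) \<zeta>"

lemma cfg_meas2_pt_birth_kernel_fun: "rate_meas b \<Longrightarrow> cfg_meas2_pt (birth_kernel b)"
  using cfg_meas2_pt_birth_kernel[of b] unfolding birth_kernel_def[abs_def] .

text \<open>The summands of L_1 G at \<eta> = \<xi> \<union> \<zeta>; the death part only runs over \<xi> \<subset> \<eta>,
  i.e.\ over non-empty \<zeta>.\<close>
definition death_summand :: "('a \<Rightarrow> 'a set \<Rightarrow> real) \<Rightarrow> ('a set \<Rightarrow> complex) \<Rightarrow> 'a set \<Rightarrow> 'a set \<Rightarrow> complex" where
  "death_summand d G \<xi> \<zeta> = - (of_bool (\<zeta> \<noteq> {}) * G \<xi> * of_real (death_kernel d \<xi> \<zeta>))"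

definition birth_summand ::
    "('a::euclidean_space \<Rightarrow> 'a set \<Rightarrow> real) \<Rightarrow> ('a set \<Rightarrow> complex) \<Rightarrow> 'a set \<Rightarrow> 'a set \<Rightarrow> complex" where
  "birth_summand b G \<xi> \<zeta> = (\<integral>t. G (insert t \<xi>) * of_real (birth_kernel b \<xi> \<zeta> t) \<partial>lborel)"

definition death_term ::
    "real \<Rightarrow> ('a \<Rightarrow> 'a set \<Rightarrow> real) \<Rightarrow> ('a set \<Rightarrow> complex) \<Rightarrow> 'a set \<Rightarrow> 'a set \<Rightarrow> ennreal" where
  "death_term C d G \<xi> \<zeta> = ennreal (of_bool (\<zeta> \<noteq> {}) * cmod (G \<xi>) *
     (\<Sum>y\<in>\<xi>. \<bar>Kinv (\<lambda>\<zeta>'. d y (\<zeta>' \<union> (\<xi> - {y}))) \<zeta>\<bar>) * C ^ card \<xi> * C ^ card \<zeta>)"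

definition birth_term ::
    "real \<Rightarrow> ('a::euclidean_space \<Rightarrow> 'a set \<Rightarrow> real) \<Rightarrow> ('a set \<Rightarrow> complex) \<Rightarrow> 'a set \<Rightarrow> 'a set \<Rightarrow> ennreal" where
  "birth_term C b G \<xi> \<zeta> = (\<integral>\<^sup>+t. ennreal (cmod (G (insert t \<xi>)) * \<bar>birth_kernel b \<xi> \<zeta> t\<bar> *
     C ^ card \<xi> * C ^ card \<zeta>) \<partial>lborel)"

lemma L1_split:
  assumes \<eta>: "finite \<eta>"
  shows "L1 d b G \<eta> = (\<Sum>\<xi>\<in>Pow \<eta>. death_summand d G \<xi> (\<eta> - \<xi>)) + (\<Sum>\<xi>\<in>Pow \<eta>. birth_summand b G \<xi> (\<eta> - \<xi>))"
proof -
  have "(\<Sum>\<xi>\<in>Pow \<eta>. death_summand d G \<xi> (\<eta> - \<xi>)) = (\<Sum>\<xi>\<in>{\<xi>. \<xi> \<subset> \<eta>}. death_summand d G \<xi> (\<eta> - \<xi>))"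
    using \<eta> by (intro sum.mono_neutral_right) (auto simp: death_summand_def)
  also have "\<dots> = (\<Sum>\<xi>\<in>{\<xi>. \<xi> \<subset> \<eta>}. - (G \<xi> * of_real (death_kernel d \<xi> (\<eta> - \<xi>))))"
    by (intro sum.cong refl) (auto simp: death_summand_def)
  also have "\<dots> = - (\<Sum>\<xi>\<in>{\<xi>. \<xi> \<subset> \<eta>}. G \<xi> * of_real (death_kernel d \<xi> (\<eta> - \<xi>)))"
    by (rule sum_negf)
  finally show ?thesis
    unfolding L1_def death_kernel_def birth_summand_def birth_kernel_def birth_integrand_def by simp
qed

lemma cfg_meas2_death_summand:
  fixes d :: "'a::euclidean_space \<Rightarrow> 'a set \<Rightarrow> real"
  assumes d: "rate_meas d" and G: "cfg_meas G"
  shows "cfg_meas2 (death_summand d G)"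
proof -
  have "cfg_meas2 (\<lambda>\<xi> \<zeta>. \<Sum>y\<in>\<xi>. (\<lambda>x. x) (Kinv (\<lambda>\<zeta>'. d y (\<zeta>' \<union> (\<xi> - {y}))) \<zeta>))"
    by (rule cfg_meas2_death_kernel[OF d]) simp
  then have "cfg_meas2 (death_kernel d)"
    unfolding death_kernel_def[abs_def] by simp
  from cfg_meas2_comp[OF this, of complex_of_real]
  have "cfg_meas2 (\<lambda>\<xi> \<zeta>. of_real (death_kernel d \<xi> \<zeta>) :: complex)" by simp
  then have "cfg_meas2 (\<lambda>\<xi> \<zeta>. of_bool (\<zeta> \<noteq> {}) * G \<xi> * of_real (death_kernel d \<xi> \<zeta>))"
    by (intro cfg_meas2_mult cfg_meas2_right[OF cfg_meas_nonempty] cfg_meas2_left[OF G])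
  from cfg_meas2_comp[OF this, of uminus] show ?thesis
    unfolding death_summand_def[abs_def] by simp
qed

lemma cfg_meas2_birth_summand:
  fixes b :: "'a::euclidean_space \<Rightarrow> 'a set \<Rightarrow> real"
  assumes b: "rate_meas b" and G: "cfg_meas G"
  shows "cfg_meas2 (birth_summand b G)"
proof -
  have "cfg_meas2_pt (\<lambda>\<xi> \<zeta> t. G (insert t \<xi>) * complex_of_real (birth_kernel b \<xi> \<zeta> t))"
    by (intro cfg_meas2_pt_mult cfg_meas2_pt_lift(3)[OF G]
        cfg_meas2_pt_comp[OF cfg_meas2_pt_birth_kernel_fun[OF b]]) simp
  from cfg_meas2_pt_integral[OF this] show ?thesis unfolding birth_summand_def[abs_def] .
qed

lemma LP_meas_L1:
  assumes d: "rate_meas d" and b: "rate_meas b" and G: "LP_meas G"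
  shows "LP_meas (L1 d b G)"
proof -
  have G': "cfg_meas G" using G by (simp add: LP_meas_iff_cfg_meas)
  have "cfg_meas (\<lambda>\<eta>. (\<Sum>\<xi>\<in>Pow \<eta>. death_summand d G \<xi> (\<eta> - \<xi>)) + (\<Sum>\<xi>\<in>Pow \<eta>. birth_summand b G \<xi> (\<eta> - \<xi>)))"
    by (intro cfg_meas_add cfg_meas_sum_Pow cfg_meas2_death_summand cfg_meas2_birth_summand d b G')
  then show ?thesis unfolding LP_meas_iff_cfg_meas cfg_meas_def by (simp add: L1_split)
qed

lemma norm_integral_le_nn_integral:
  fixes f :: "'b \<Rightarrow> complex"
  assumes c: "c \<ge> 0"
  shows "ennreal (cmod (\<integral>t. f t \<partial>M) * c) \<le> (\<integral>\<^sup>+t. ennreal (cmod (f t) * c) \<partial>M)"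
proof (cases "integrable M f")
  case True
  have "ennreal (cmod (\<integral>t. f t \<partial>M) * c) = ennreal (cmod (\<integral>t. f t \<partial>M)) * ennreal c"
    using c by (simp add: ennreal_mult)
  also have "\<dots> \<le> (\<integral>\<^sup>+t. ennreal (cmod (f t)) \<partial>M) * ennreal c"
    by (rule mult_right_mono[OF integral_norm_bound_ennreal[OF True]]) simp
  also have "\<dots> = (\<integral>\<^sup>+t. ennreal (cmod (f t) * c) \<partial>M)"
    using c borel_measurable_integrable[OF True]
    by (simp add: nn_integral_multc[symmetric] ennreal_mult)
  finally show ?thesis .
qed (simp add: not_integrable_integral_eq)

lemma power_card_split:
  "finite \<eta> \<Longrightarrow> \<xi> \<subseteq> \<eta> \<Longrightarrow> (C::real) ^ card \<eta> = C ^ card \<xi> * C ^ card (\<eta> - \<xi>)"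
  by (metis card_Diff_subset card_mono le_add_diff_inverse power_add finite_subset)

lemma death_summand_le:
  assumes "C \<ge> 0"
  shows "ennreal (cmod (death_summand d G \<xi> \<zeta>) * (C ^ card \<xi> * C ^ card \<zeta>)) \<le> death_term C d G \<xi> \<zeta>"
  unfolding death_term_def
proof (rule ennreal_leI)
  have "\<bar>death_kernel d \<xi> \<zeta>\<bar> \<le> (\<Sum>y\<in>\<xi>. \<bar>Kinv (\<lambda>\<zeta>'. d y (\<zeta>' \<union> (\<xi> - {y}))) \<zeta>\<bar>)"
    unfolding death_kernel_def by (rule sum_abs)
  then have "cmod (G \<xi>) * \<bar>death_kernel d \<xi> \<zeta>\<bar> * (C ^ card \<xi> * C ^ card \<zeta>)
      \<le> cmod (G \<xi>) * (\<Sum>y\<in>\<xi>. \<bar>Kinv (\<lambda>\<zeta>'. d y (\<zeta>' \<union> (\<xi> - {y}))) \<zeta>\<bar>) * (C ^ card \<xi> * C ^ card \<zeta>)"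
    using assms by (intro mult_right_mono mult_left_mono) auto
  then show "cmod (death_summand d G \<xi> \<zeta>) * (C ^ card \<xi> * C ^ card \<zeta>)
      \<le> of_bool (\<zeta> \<noteq> {}) * cmod (G \<xi>) * (\<Sum>y\<in>\<xi>. \<bar>Kinv (\<lambda>\<zeta>'. d y (\<zeta>' \<union> (\<xi> - {y}))) \<zeta>\<bar>) * C ^ card \<xi> * C ^ card \<zeta>"
    by (simp add: death_summand_def norm_mult mult.assoc)
qed

lemma birth_summand_le:
  assumes "C \<ge> 0"
  shows "ennreal (cmod (birth_summand b G \<xi> \<zeta>) * (C ^ card \<xi> * C ^ card \<zeta>)) \<le> birth_term C b G \<xi> \<zeta>"
  unfolding birth_summand_def birth_term_def
  using norm_integral_le_nn_integral[of "C ^ card \<xi> * C ^ card \<zeta>" lborel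
      "\<lambda>t. G (insert t \<xi>) * of_real (birth_kernel b \<xi> \<zeta> t)"] assms
  by (simp add: norm_mult mult.assoc)

lemma norm_sum_Pow_le:
  fixes F :: "'a set \<Rightarrow> 'a set \<Rightarrow> complex"
  assumes \<eta>: "finite \<eta>" and C: "C \<ge> 0"
  shows "ennreal (cmod (\<Sum>\<xi>\<in>Pow \<eta>. F \<xi> (\<eta> - \<xi>)) * C ^ card \<eta>)
    \<le> (\<Sum>\<xi>\<in>Pow \<eta>. ennreal (cmod (F \<xi> (\<eta> - \<xi>)) * (C ^ card \<xi> * C ^ card (\<eta> - \<xi>))))"
proof -
  have "cmod (\<Sum>\<xi>\<in>Pow \<eta>. F \<xi> (\<eta> - \<xi>)) * C ^ card \<eta> \<le> (\<Sum>\<xi>\<in>Pow \<eta>. cmod (F \<xi> (\<eta> - \<xi>))) * C ^ card \<eta>"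
    using C by (intro mult_right_mono norm_sum) simp
  also have "\<dots> = (\<Sum>\<xi>\<in>Pow \<eta>. cmod (F \<xi> (\<eta> - \<xi>)) * (C ^ card \<xi> * C ^ card (\<eta> - \<xi>)))"
    unfolding sum_distrib_right using \<eta> by (intro sum.cong refl) (simp add: power_card_split)
  finally have "ennreal (cmod (\<Sum>\<xi>\<in>Pow \<eta>. F \<xi> (\<eta> - \<xi>)) * C ^ card \<eta>)
      \<le> ennreal (\<Sum>\<xi>\<in>Pow \<eta>. cmod (F \<xi> (\<eta> - \<xi>)) * (C ^ card \<xi> * C ^ card (\<eta> - \<xi>)))"
    by (rule ennreal_leI)
  also have "\<dots> = (\<Sum>\<xi>\<in>Pow \<eta>. ennreal (cmod (F \<xi> (\<eta> - \<xi>)) * (C ^ card \<xi> * C ^ card (\<eta> - \<xi>))))"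
    using C by (intro sum_ennreal[symmetric]) simp
  finally show ?thesis .
qed

lemma L1_pointwise_bound:
  fixes d b :: "'a::euclidean_space \<Rightarrow> 'a set \<Rightarrow> real" and G :: "'a set \<Rightarrow> complex"
  assumes \<eta>: "finite \<eta>" and C: "C \<ge> 0"
  shows "ennreal (cmod (L1 d b G \<eta>) * C ^ card \<eta>)
    \<le> (\<Sum>\<xi>\<in>Pow \<eta>. death_term C d G \<xi> (\<eta> - \<xi>)) + (\<Sum>\<xi>\<in>Pow \<eta>. birth_term C b G \<xi> (\<eta> - \<xi>))"
proof -
  let ?D = "\<Sum>\<xi>\<in>Pow \<eta>. death_summand d G \<xi> (\<eta> - \<xi>)" and ?B = "\<Sum>\<xi>\<in>Pow \<eta>. birth_summand b G \<xi> (\<eta> - \<xi>)"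
  have Cp: "0 \<le> C ^ card \<eta>" using C by simp
  have "cmod (L1 d b G \<eta>) * C ^ card \<eta> \<le> cmod ?D * C ^ card \<eta> + cmod ?B * C ^ card \<eta>"
    unfolding L1_split[OF \<eta>] distrib_right[symmetric] using Cp by (intro mult_right_mono norm_triangle_ineq)
  then have "ennreal (cmod (L1 d b G \<eta>) * C ^ card \<eta>) \<le> ennreal (cmod ?D * C ^ card \<eta>) + ennreal (cmod ?B * C ^ card \<eta>)"
    using Cp by (simp add: ennreal_plus[symmetric] ennreal_leI del: ennreal_plus)
  also have "ennreal (cmod ?D * C ^ card \<eta>) \<le> (\<Sum>\<xi>\<in>Pow \<eta>. death_term C d G \<xi> (\<eta> - \<xi>))"
    using norm_sum_Pow_le[OF \<eta> C] sum_mono[OF death_summand_le[OF C]] by (rule order.trans)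
  also have "ennreal (cmod ?B * C ^ card \<eta>) \<le> (\<Sum>\<xi>\<in>Pow \<eta>. birth_term C b G \<xi> (\<eta> - \<xi>))"
    using norm_sum_Pow_le[OF \<eta> C] sum_mono[OF birth_summand_le[OF C]] by (rule order.trans)
  finally show ?thesis by (simp add: add_mono)
qed

lemma Dtot_nonneg: "(\<And>x \<eta>. 0 \<le> d x \<eta>) \<Longrightarrow> 0 \<le> Dtot d \<eta>"
  unfolding Dtot_def by (simp add: sum_nonneg)

lemma norm_L0: "(\<And>x \<eta>. 0 \<le> d x \<eta>) \<Longrightarrow> cmod (L0 d G \<eta>) = Dtot d \<eta> * cmod (G \<eta>)"
  by (simp add: L0_def norm_mult Dtot_nonneg)

lemma cfg_meas_L0_weight:
  assumes d: "rate_meas d" and G: "cfg_meas G"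
  shows "cfg_meas (\<lambda>\<eta>. ennreal (cmod (L0 d G \<eta>) * C ^ card \<eta>))"
proof -
  have "cfg_meas (\<lambda>\<eta>. of_real (Dtot d \<eta>) :: complex)"
    by (rule cfg_meas_comp[OF cfg_meas_Dtot[OF d]]) measurable
  then have "cfg_meas (\<lambda>\<eta>. of_real (Dtot d \<eta>) * G \<eta>)"
    by (rule cfg_meas_mult[OF _ G])
  then have "cfg_meas (\<lambda>\<eta>. cmod (of_real (Dtot d \<eta>) * G \<eta>))"
    by (rule cfg_meas_comp) measurable
  then have "cfg_meas (\<lambda>\<eta>. cmod (L0 d G \<eta>) * C ^ card \<eta>)"
    unfolding L0_def norm_minus_cancel by (rule cfg_meas_mult[OF _ cfg_meas_card])
  then show ?thesis by (rule cfg_meas_comp) measurable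
qed

lemma Kinv_empty [simp]: "Kinv f {} = f {}"
  by (simp add: Kinv_def)

text \<open>The C-weighted norm of K_0^{-1} f splits into the contribution |f(\<emptyset>)| of the
  empty configuration and the rest; for the death rates the first part sums to D.\<close>
lemma LP_Kinv_norm_split:
  "LP_nn (\<lambda>\<zeta>. ennreal (\<bar>Kinv f \<zeta>\<bar> * C ^ card \<zeta>))
    = ennreal \<bar>f {}\<bar> + LP_nn (\<lambda>\<zeta>. ennreal (of_bool (\<zeta> \<noteq> {}) * \<bar>Kinv f \<zeta>\<bar> * C ^ card \<zeta>))"
proof -
  have "LP_nn (\<lambda>\<zeta>. if \<zeta> = {} then 0 else ennreal (\<bar>Kinv f \<zeta>\<bar> * C ^ card \<zeta>))
      = LP_nn (\<lambda>\<zeta>. ennreal (of_bool (\<zeta> \<noteq> {}) * \<bar>Kinv f \<zeta>\<bar> * C ^ card \<zeta>))"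
    by (rule LP_cong) simp
  then show ?thesis
    using LP_nn_split_empty[of "\<lambda>\<zeta>. ennreal (\<bar>Kinv f \<zeta>\<bar> * C ^ card \<zeta>)"] by simp
qed

lemma death_excess_bound:
  fixes d :: "'a::euclidean_space \<Rightarrow> 'a set \<Rightarrow> real"
  assumes d_nonneg: "\<And>x \<eta>. 0 \<le> d x \<eta>" and a1: "a1 \<ge> 1"
    and hyp: "(\<Sum>x\<in>\<xi>. rate_norm C d \<xi> x) \<le> ennreal (a1 * Dtot d \<xi>)"
  shows "(\<Sum>y\<in>\<xi>. LP_nn (\<lambda>\<zeta>. ennreal (of_bool (\<zeta> \<noteq> {}) * \<bar>Kinv (\<lambda>\<zeta>'. d y (\<zeta>' \<union> (\<xi> - {y}))) \<zeta>\<bar> * C ^ card \<zeta>)))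
    \<le> ennreal ((a1 - 1) * Dtot d \<xi>)"
    (is "(\<Sum>y\<in>\<xi>. ?X y) \<le> _")
proof -
  have D: "0 \<le> Dtot d \<xi>" using d_nonneg by (rule Dtot_nonneg)
  have "ennreal (Dtot d \<xi>) + (\<Sum>y\<in>\<xi>. ?X y)
      = (\<Sum>x\<in>\<xi>. rate_norm C d \<xi> x)"
    unfolding rate_norm_def LP_Kinv_norm_split Dtot_def sum.distrib using d_nonneg by (simp add: sum_ennreal)
  also have "\<dots> \<le> ennreal (a1 * Dtot d \<xi>)" by (rule hyp)
  also have "\<dots> = ennreal (Dtot d \<xi>) + ennreal ((a1 - 1) * Dtot d \<xi>)"
  proof -
    have "0 \<le> (a1 - 1) * Dtot d \<xi>" using a1 D by simp
    then show ?thesis using D by (subst ennreal_plus[symmetric]) (simp_all add: algebra_simps)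
  qed
  finally show ?thesis by (simp add: ennreal_add_left_cancel_le)
qed

lemma LP_death_term:
  fixes d :: "'a::euclidean_space \<Rightarrow> 'a set \<Rightarrow> real"
  assumes d: "rate_meas d" and C: "C \<ge> 0" and \<xi>: "finite \<xi>"
  shows "LP_nn (death_term C d G \<xi>) = ennreal (cmod (G \<xi>) * C ^ card \<xi>) *
    (\<Sum>y\<in>\<xi>. LP_nn (\<lambda>\<zeta>. ennreal (of_bool (\<zeta> \<noteq> {}) * \<bar>Kinv (\<lambda>\<zeta>'. d y (\<zeta>' \<union> (\<xi> - {y}))) \<zeta>\<bar> * C ^ card \<zeta>)))"
proof -
  define k where "k y \<zeta> = of_bool (\<zeta> \<noteq> {}) * \<bar>Kinv (\<lambda>\<zeta>'. d y (\<zeta>' \<union> (\<xi> - {y}))) \<zeta>\<bar> * C ^ card \<zeta>" for y \<zeta>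
  have k_nonneg: "0 \<le> k y \<zeta>" for y \<zeta> unfolding k_def using C by simp
  have k_meas: "cfg_meas (\<lambda>\<zeta>. ennreal (k y \<zeta>))" for y
  proof -
    have "cfg_meas (\<lambda>\<zeta>. of_bool (\<zeta> \<noteq> {}) * \<bar>Kinv (\<lambda>\<zeta>'. d y (\<zeta>' \<union> (\<xi> - {y}))) \<zeta>\<bar> * C ^ card \<zeta>)"
      using \<xi> by (intro cfg_meas_mult cfg_meas_nonempty cfg_meas_card cfg_meas_comp[where h=abs]
          cfg_meas_Kinv_fixed[OF d]) simp_all
    then show ?thesis unfolding k_def by (rule cfg_meas_comp) simp
  qed
  have pointwise: "death_term C d G \<xi> \<zeta> = ennreal (cmod (G \<xi>) * C ^ card \<xi>) * (\<Sum>y\<in>\<xi>. ennreal (k y \<zeta>))" for \<zeta>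
  proof -
    have sum_k: "(\<Sum>y\<in>\<xi>. k y \<zeta>)
        = of_bool (\<zeta> \<noteq> {}) * (\<Sum>y\<in>\<xi>. \<bar>Kinv (\<lambda>\<zeta>'. d y (\<zeta>' \<union> (\<xi> - {y}))) \<zeta>\<bar>) * C ^ card \<zeta>"
      unfolding k_def by (simp add: sum_distrib_left sum_distrib_right)
    have "ennreal (cmod (G \<xi>) * C ^ card \<xi>) * (\<Sum>y\<in>\<xi>. ennreal (k y \<zeta>))
        = ennreal (cmod (G \<xi>) * C ^ card \<xi> * (\<Sum>y\<in>\<xi>. k y \<zeta>))"
      using C k_nonneg by (simp add: sum_ennreal sum_nonneg ennreal_mult)
    also have "\<dots> = death_term C d G \<xi> \<zeta>"
      unfolding death_term_def sum_k by (rule arg_cong[where f=ennreal]) (simp add: algebra_simps)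
    finally show ?thesis ..
  qed
  have "LP_nn (death_term C d G \<xi>) = LP_nn (\<lambda>\<zeta>. ennreal (cmod (G \<xi>) * C ^ card \<xi>) * (\<Sum>y\<in>\<xi>. ennreal (k y \<zeta>)))"
    by (rule LP_cong) (rule pointwise)
  also have "\<dots> = ennreal (cmod (G \<xi>) * C ^ card \<xi>) * LP_nn (\<lambda>\<zeta>. \<Sum>y\<in>\<xi>. ennreal (k y \<zeta>))"
    by (rule LP_cmult[OF cfg_meas_sum[OF k_meas]])
  also have "\<dots> = ennreal (cmod (G \<xi>) * C ^ card \<xi>) * (\<Sum>y\<in>\<xi>. LP_nn (\<lambda>\<zeta>. ennreal (k y \<zeta>)))"
    by (simp add: LP_sum[OF \<xi>] k_meas)
  finally show ?thesis unfolding k_def .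
qed

lemma cfg_meas2_death_term:
  fixes d :: "'a::euclidean_space \<Rightarrow> 'a set \<Rightarrow> real"
  assumes d: "rate_meas d" and G: "cfg_meas G"
  shows "cfg_meas2 (death_term C d G)"
proof -
  have "cfg_meas2 (\<lambda>\<xi> \<zeta>. of_bool (\<zeta> \<noteq> {}) * cmod (G \<xi>) *
      (\<Sum>y\<in>\<xi>. \<bar>Kinv (\<lambda>\<zeta>'. d y (\<zeta>' \<union> (\<xi> - {y}))) \<zeta>\<bar>) * C ^ card \<xi> * C ^ card \<zeta>)"
    by (intro cfg_meas2_mult cfg_meas2_right[OF cfg_meas_nonempty] cfg_meas2_left[OF cfg_meas_comp[OF G]]
        cfg_meas2_death_kernel[OF d] cfg_meas2_left[OF cfg_meas_card] cfg_meas2_right[OF cfg_meas_card]) simp_all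
  from cfg_meas2_comp[OF this, of ennreal] show ?thesis
    unfolding death_term_def[abs_def] by simp
qed

lemma death_part_bound:
  fixes d :: "'a::euclidean_space \<Rightarrow> 'a set \<Rightarrow> real"
  assumes d_nonneg: "\<And>x \<eta>. 0 \<le> d x \<eta>" and d: "rate_meas d" and C: "C \<ge> 0" and a1: "a1 \<ge> 1"
    and hyp_d: "\<And>\<xi>. finite \<xi> \<Longrightarrow> (\<Sum>x\<in>\<xi>. rate_norm C d \<xi> x) \<le> ennreal (a1 * Dtot d \<xi>)"
    and G: "cfg_meas G"
  shows "LP_nn (\<lambda>\<eta>. \<Sum>\<xi>\<in>Pow \<eta>. death_term C d G \<xi> (\<eta> - \<xi>)) \<le> ennreal (a1 - 1) * normC C (L0 d G)"
proof -
  have "LP_nn (death_term C d G \<xi>) \<le> ennreal (a1 - 1) * ennreal (cmod (L0 d G \<xi>) * C ^ card \<xi>)"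
    if \<xi>: "finite \<xi>" for \<xi>
  proof -
    have "LP_nn (death_term C d G \<xi>) \<le> ennreal (cmod (G \<xi>) * C ^ card \<xi>) * ennreal ((a1 - 1) * Dtot d \<xi>)"
      unfolding LP_death_term[OF d C \<xi>]
      by (rule mult_left_mono[OF death_excess_bound[OF d_nonneg a1 hyp_d[OF \<xi>]]]) simp
    also have "\<dots> = ennreal (a1 - 1) * ennreal (cmod (L0 d G \<xi>) * C ^ card \<xi>)"
      using C a1 Dtot_nonneg[of d \<xi>, OF d_nonneg]
      by (simp add: norm_L0[OF d_nonneg] ennreal_mult[symmetric] ac_simps)
    finally show ?thesis .
  qed
  then have "LP_nn (\<lambda>\<xi>. LP_nn (death_term C d G \<xi>))
      \<le> LP_nn (\<lambda>\<xi>. ennreal (a1 - 1) * ennreal (cmod (L0 d G \<xi>) * C ^ card \<xi>))"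
    by (rule LP_mono)
  also have "\<dots> = ennreal (a1 - 1) * normC C (L0 d G)"
    unfolding normC_def by (rule LP_cmult[OF cfg_meas_L0_weight[OF d G]])
  finally show ?thesis
    by (rule order.trans[OF LP_split_le[OF cfg_meas2_death_term[OF d G]]])
qed

text \<open>After the Mecke formula moves the added point t into the configuration,
  the birth part is controlled by this weight on (\<omega>, t) with t \<in> \<omega>.\<close>
definition birth_weight ::
    "real \<Rightarrow> ('a set \<Rightarrow> complex) \<Rightarrow> ('a::euclidean_space \<Rightarrow> 'a set \<Rightarrow> real) \<Rightarrow> 'a set \<Rightarrow> 'a \<Rightarrow> ennreal" where
  "birth_weight C G b \<omega> t = ennreal (cmod (G \<omega>) * C ^ (card \<omega> - 1)) * rate_norm C b \<omega> t"

lemma cfg_meas_pt_birth_weight: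
  assumes b: "rate_meas b" and G: "cfg_meas G"
  shows "cfg_meas_pt (birth_weight C G b)"
proof -
  have "cfg_meas (\<lambda>\<omega>. cmod (G \<omega>))" by (rule cfg_meas_comp[OF G]) measurable
  then have "cfg_meas (\<lambda>\<omega>. cmod (G \<omega>) * C ^ (card \<omega> - 1))"
    by (rule cfg_meas_mult[OF _ cfg_meas_card])
  then have "cfg_meas (\<lambda>\<omega>. ennreal (cmod (G \<omega>) * C ^ (card \<omega> - 1)))"
    by (rule cfg_meas_comp) measurable
  then show ?thesis
    unfolding birth_weight_def[abs_def]
    by (rule cfg_meas_pt_mult_ennreal[OF cfg_meas_pt_const cfg_meas_pt_rate_norm[OF b]])
qed

lemma cfg_meas2_pt_birth_integrand_weight:
  fixes b :: "'a::euclidean_space \<Rightarrow> 'a set \<Rightarrow> real"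
  assumes b: "rate_meas b" and G: "cfg_meas G"
  shows "cfg_meas2_pt (\<lambda>\<xi> \<zeta> t. ennreal (cmod (G (insert t \<xi>)) * \<bar>birth_kernel b \<xi> \<zeta> t\<bar> * C ^ card \<xi> * C ^ card \<zeta>))"
proof -
  have a: "cfg_meas2_pt (\<lambda>\<xi> \<zeta> t::'a. cmod (G (insert t \<xi>)))"
    by (rule cfg_meas2_pt_comp[OF cfg_meas2_pt_lift(3)[OF G]]) measurable
  have k: "cfg_meas2_pt (\<lambda>\<xi> \<zeta> t. \<bar>birth_kernel b \<xi> \<zeta> t\<bar>)"
    by (rule cfg_meas2_pt_comp[OF cfg_meas2_pt_birth_kernel_fun[OF b]]) measurable
  have "cfg_meas2_pt (\<lambda>\<xi> \<zeta> t. cmod (G (insert t \<xi>)) * \<bar>birth_kernel b \<xi> \<zeta> t\<bar> * C ^ card \<xi> * C ^ card \<zeta>)"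
    by (intro cfg_meas2_pt_mult a k cfg_meas2_pt_lift(1,2)[OF cfg_meas_card])
  then show ?thesis by (rule cfg_meas2_pt_comp) measurable
qed

lemma cfg_meas2_birth_term:
  assumes b: "rate_meas b" and G: "cfg_meas G"
  shows "cfg_meas2 (birth_term C b G)"
  using cfg_meas2_pt_nn_integral[OF cfg_meas2_pt_birth_integrand_weight[OF b G, of C]]
  unfolding birth_term_def[abs_def] .

lemma AE_lborel_notin_finite:
  assumes "finite (\<xi> :: 'a::euclidean_space set)"
  shows "AE t in lborel. t \<notin> \<xi>"
proof -
  have "AE t in lborel. \<forall>s\<in>\<xi>. t \<noteq> s"
    by (rule AE_finite_allI[OF assms]) (rule AE_lborel_singleton)
  then show ?thesis by eventually_elim auto
qed

text \<open>Exchanging the \<zeta>- and t-integrations in the birth term; for almost every t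
  the point t is new, so insert t \<xi> \<setminus> t = \<xi>.\<close>
lemma LP_birth_term:
  fixes b :: "'a::euclidean_space \<Rightarrow> 'a set \<Rightarrow> real" and G :: "'a set \<Rightarrow> complex"
  assumes b: "rate_meas b" and G: "cfg_meas G" and C: "C \<ge> 0" and \<xi>: "finite \<xi>"
  shows "LP_nn (birth_term C b G \<xi>) = (\<integral>\<^sup>+t. birth_weight C G b (insert t \<xi>) t \<partial>lborel)"
proof -
  define f where "f \<zeta> t = ennreal (cmod (G (insert t \<xi>)) * \<bar>birth_kernel b \<xi> \<zeta> t\<bar> * C ^ card \<xi> * C ^ card \<zeta>)"
    for \<zeta> t
  have "cfg_meas_pt f"
    using cfg_meas2_pt_fix[OF cfg_meas2_pt_birth_integrand_weight[OF b G, of C] \<xi>] unfolding f_def .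
  then have "LP_nn (birth_term C b G \<xi>) = (\<integral>\<^sup>+t. LP_nn (\<lambda>\<zeta>. f \<zeta> t) \<partial>lborel)"
    unfolding birth_term_def f_def[symmetric] by (rule LP_nn_integral_swap)
  also have "\<dots> = (\<integral>\<^sup>+t. birth_weight C G b (insert t \<xi>) t \<partial>lborel)"
  proof (rule nn_integral_cong_AE)
    show "AE t in lborel. LP_nn (\<lambda>\<zeta>. f \<zeta> t) = birth_weight C G b (insert t \<xi>) t"
      using AE_lborel_notin_finite[OF \<xi>]
    proof eventually_elim
      case (elim t)
      have "LP_nn (\<lambda>\<zeta>. f \<zeta> t) = LP_nn (\<lambda>\<zeta>. ennreal (cmod (G (insert t \<xi>)) * C ^ card \<xi>) *
          ennreal (\<bar>birth_kernel b \<xi> \<zeta> t\<bar> * C ^ card \<zeta>))"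
        unfolding f_def using C by (intro LP_cong) (simp add: ennreal_mult[symmetric] ac_simps)
      also have "\<dots> = ennreal (cmod (G (insert t \<xi>)) * C ^ card \<xi>) *
          LP_nn (\<lambda>\<zeta>. ennreal (\<bar>birth_kernel b \<xi> \<zeta> t\<bar> * C ^ card \<zeta>))"
      proof (rule LP_cmult)
        have "cfg_meas (\<lambda>\<zeta>. \<bar>Kinv (\<lambda>\<zeta>'. b t (\<zeta>' \<union> \<xi>)) \<zeta>\<bar>)"
          by (rule cfg_meas_comp[OF cfg_meas_Kinv_fixed[OF b \<xi>]]) measurable
        then have "cfg_meas (\<lambda>\<zeta>. \<bar>birth_kernel b \<xi> \<zeta> t\<bar> * C ^ card \<zeta>)"
          unfolding birth_kernel_def by (rule cfg_meas_mult[OF _ cfg_meas_card])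
        then show "cfg_meas (\<lambda>\<zeta>. ennreal (\<bar>birth_kernel b \<xi> \<zeta> t\<bar> * C ^ card \<zeta>))"
          by (rule cfg_meas_comp) measurable
      qed
      also have "\<dots> = birth_weight C G b (insert t \<xi>) t"
        using elim \<xi> by (simp add: birth_weight_def rate_norm_def birth_kernel_def insert_Diff_if)
      finally show ?case .
    qed
  qed
  finally show ?thesis .
qed

lemma birth_weight_sum_bound:
  fixes d b :: "'a::euclidean_space \<Rightarrow> 'a set \<Rightarrow> real" and G :: "'a set \<Rightarrow> complex"
  assumes d_nonneg: "\<And>x \<eta>. 0 \<le> d x \<eta>" and C: "C > 0" and a2: "a2 > 0" and \<omega>: "finite \<omega>"
    and hyp: "(\<Sum>x\<in>\<omega>. rate_norm C b \<omega> x) \<le> ennreal (a2 * Dtot d \<omega>)"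
  shows "(\<Sum>t\<in>\<omega>. birth_weight C G b \<omega> t) \<le> ennreal (a2 / C) * ennreal (cmod (L0 d G \<omega>) * C ^ card \<omega>)"
proof (cases "\<omega> = {}")
  case False
  have D: "0 \<le> Dtot d \<omega>" using d_nonneg by (rule Dtot_nonneg)
  have "(\<Sum>t\<in>\<omega>. birth_weight C G b \<omega> t) \<le> ennreal (cmod (G \<omega>) * C ^ (card \<omega> - 1)) * ennreal (a2 * Dtot d \<omega>)"
    unfolding birth_weight_def sum_distrib_left[symmetric] by (rule mult_left_mono[OF hyp]) simp
  also have "\<dots> = ennreal (a2 / C) * ennreal (cmod (L0 d G \<omega>) * C ^ card \<omega>)"
  proof -
    have "C ^ card \<omega> = C * C ^ (card \<omega> - 1)"
      using False \<omega> by (metis card_0_eq Suc_pred' neq0_conv power_Suc)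
    then show ?thesis
      using C a2 D by (simp add: norm_L0[OF d_nonneg] ennreal_mult[symmetric] field_simps)
  qed
  finally show ?thesis .
qed simp

lemma birth_part_bound:
  fixes d b :: "'a::euclidean_space \<Rightarrow> 'a set \<Rightarrow> real"
  assumes d_nonneg: "\<And>x \<eta>. 0 \<le> d x \<eta>" and d: "rate_meas d" and b: "rate_meas b"
    and C: "C > 0" and a2: "a2 > 0"
    and hyp_b: "\<And>\<xi>. finite \<xi> \<Longrightarrow> (\<Sum>x\<in>\<xi>. rate_norm C b \<xi> x) \<le> ennreal (a2 * Dtot d \<xi>)"
    and G: "cfg_meas G"
  shows "LP_nn (\<lambda>\<eta>. \<Sum>\<xi>\<in>Pow \<eta>. birth_term C b G \<xi> (\<eta> - \<xi>)) \<le> ennreal (a2 / C) * normC C (L0 d G)"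
proof -
  have "LP_nn (\<lambda>\<eta>. \<Sum>\<xi>\<in>Pow \<eta>. birth_term C b G \<xi> (\<eta> - \<xi>)) \<le> LP_nn (\<lambda>\<xi>. LP_nn (birth_term C b G \<xi>))"
    by (rule LP_split_le[OF cfg_meas2_birth_term[OF b G]])
  also have "\<dots> = LP_nn (\<lambda>\<xi>. \<integral>\<^sup>+t. birth_weight C G b (insert t \<xi>) t \<partial>lborel)"
    using C by (intro LP_cong LP_birth_term[OF b G]) simp_all
  also have "\<dots> = LP_nn (\<lambda>\<omega>. \<Sum>t\<in>\<omega>. birth_weight C G b \<omega> t)"
    by (rule LP_mecke[OF cfg_meas_pt_birth_weight[OF b G]])
  also have "\<dots> \<le> LP_nn (\<lambda>\<omega>. ennreal (a2 / C) * ennreal (cmod (L0 d G \<omega>) * C ^ card \<omega>))"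
    by (intro LP_mono birth_weight_sum_bound[OF d_nonneg C a2 _ hyp_b])
  also have "\<dots> = ennreal (a2 / C) * normC C (L0 d G)"
    unfolding normC_def by (rule LP_cmult[OF cfg_meas_L0_weight[OF d G]])
  finally show ?thesis .
qed

lemma L1_norm_bound:
  fixes d b :: "'a::euclidean_space \<Rightarrow> 'a set \<Rightarrow> real"
  assumes d_nonneg: "\<And>x \<eta>. 0 \<le> d x \<eta>" and d: "rate_meas d" and b: "rate_meas b"
    and C: "C > 0" and a1: "a1 \<ge> 1" and a2: "a2 > 0"
    and hyp_d: "\<And>\<xi>. finite \<xi> \<Longrightarrow> (\<Sum>x\<in>\<xi>. rate_norm C d \<xi> x) \<le> ennreal (a1 * Dtot d \<xi>)"
    and hyp_b: "\<And>\<xi>. finite \<xi> \<Longrightarrow> (\<Sum>x\<in>\<xi>. rate_norm C b \<xi> x) \<le> ennreal (a2 * Dtot d \<xi>)"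
    and G: "cfg_meas G"
  shows "normC C (L1 d b G) \<le> ennreal (a1 - 1 + a2 / C) * normC C (L0 d G)"
proof -
  have "normC C (L1 d b G) \<le> LP_nn (\<lambda>\<eta>. (\<Sum>\<xi>\<in>Pow \<eta>. death_term C d G \<xi> (\<eta> - \<xi>))
      + (\<Sum>\<xi>\<in>Pow \<eta>. birth_term C b G \<xi> (\<eta> - \<xi>)))"
    unfolding normC_def using C by (intro LP_mono L1_pointwise_bound) simp_all
  also have "\<dots> = LP_nn (\<lambda>\<eta>. \<Sum>\<xi>\<in>Pow \<eta>. death_term C d G \<xi> (\<eta> - \<xi>))
      + LP_nn (\<lambda>\<eta>. \<Sum>\<xi>\<in>Pow \<eta>. birth_term C b G \<xi> (\<eta> - \<xi>))"
    by (intro LP_add cfg_meas_sum_Pow cfg_meas2_death_term cfg_meas2_birth_term d b G)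
  also have "\<dots> \<le> ennreal (a1 - 1) * normC C (L0 d G) + ennreal (a2 / C) * normC C (L0 d G)"
    using C by (intro add_mono death_part_bound[OF d_nonneg d _ a1 hyp_d G]
        birth_part_bound[OF d_nonneg d b C a2 hyp_b G]) simp_all
  also have "\<dots> = ennreal (a1 - 1 + a2 / C) * normC C (L0 d G)"
    using a1 a2 C by (simp add: distrib_right ennreal_plus)
  finally show ?thesis .
qed

lemma measurable_birth_integrand:
  fixes b :: "'a::euclidean_space \<Rightarrow> 'a set \<Rightarrow> real" and G :: "'a set \<Rightarrow> complex"
  assumes b: "rate_meas b" and G: "cfg_meas G" and \<eta>: "finite \<eta>" and \<xi>: "\<xi> \<subseteq> \<eta>"
  shows "birth_integrand b G \<eta> \<xi> \<in> borel_measurable lborel"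
proof -
  have k: "cfg_meas2_pt (\<lambda>\<xi> \<zeta> t. complex_of_real (birth_kernel b \<xi> \<zeta> t))"
    by (rule cfg_meas2_pt_comp[OF cfg_meas2_pt_birth_kernel_fun[OF b]]) measurable
  have "cfg_meas2_pt (\<lambda>\<xi> \<zeta> t. G (insert t \<xi>) * complex_of_real (birth_kernel b \<xi> \<zeta> t))"
    by (rule cfg_meas2_pt_mult[OF cfg_meas2_pt_lift(3)[OF G] k])
  from cfg_meas_pt_fix_cfg[OF cfg_meas2_pt_fix[OF this] finite_Diff[OF \<eta>]]
  show ?thesis
    using finite_subset[OF \<xi> \<eta>] unfolding birth_integrand_def[abs_def] birth_kernel_def by simp
qed

lemma birth_term_eq_top:
  fixes b :: "'a::euclidean_space \<Rightarrow> 'a set \<Rightarrow> real" and G :: "'a set \<Rightarrow> complex"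
  assumes b: "rate_meas b" and G: "cfg_meas G" and C: "C > 0" and \<eta>: "finite \<eta>" and \<xi>: "\<xi> \<subseteq> \<eta>"
    and not_int: "\<not> integrable lborel (birth_integrand b G \<eta> \<xi>)"
  shows "birth_term C b G \<xi> (\<eta> - \<xi>) = \<infinity>"
proof -
  have meas: "birth_integrand b G \<eta> \<xi> \<in> borel_measurable lborel"
    by (rule measurable_birth_integrand[OF b G \<eta> \<xi>])
  have "\<not> (\<integral>\<^sup>+t. ennreal (cmod (birth_integrand b G \<eta> \<xi> t)) \<partial>lborel) < \<infinity>"
    using not_int integrableI_bounded[OF meas] by blast
  then have inf: "(\<integral>\<^sup>+t. ennreal (cmod (birth_integrand b G \<eta> \<xi> t)) \<partial>lborel) = \<infinity>"
    by (simp add: less_top[symmetric])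
  have "ennreal (cmod (G (insert t \<xi>)) * \<bar>birth_kernel b \<xi> (\<eta> - \<xi>) t\<bar> * C ^ card \<xi> * C ^ card (\<eta> - \<xi>))
      = ennreal (cmod (birth_integrand b G \<eta> \<xi> t)) * ennreal (C ^ card \<eta>)" for t
    using power_card_split[OF \<eta> \<xi>, of C] C
    by (subst ennreal_mult[symmetric]) (auto simp: birth_integrand_def birth_kernel_def norm_mult mult.assoc)
  then have "birth_term C b G \<xi> (\<eta> - \<xi>)
      = (\<integral>\<^sup>+t. ennreal (cmod (birth_integrand b G \<eta> \<xi> t)) \<partial>lborel) * ennreal (C ^ card \<eta>)"
    unfolding birth_term_def using meas by (simp add: nn_integral_multc)
  then show ?thesis using inf C by (simp add: ennreal_top_mult)
qed

text \<open>If L_0 G has finite norm, then so has the birth part, and hence the integrals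
  over the added point in L_1 G exist for \<lambda>-almost all \<eta>.\<close>
lemma birth_integrable_ae:
  fixes d b :: "'a::euclidean_space \<Rightarrow> 'a set \<Rightarrow> real" and G :: "'a set \<Rightarrow> complex"
  assumes d_nonneg: "\<And>x \<eta>. 0 \<le> d x \<eta>" and d: "rate_meas d" and b: "rate_meas b"
    and C: "C > 0" and a2: "a2 > 0"
    and hyp_b: "\<And>\<xi>. finite \<xi> \<Longrightarrow> (\<Sum>x\<in>\<xi>. rate_norm C b \<xi> x) \<le> ennreal (a2 * Dtot d \<xi>)"
    and G: "cfg_meas G" and L0G: "normC C (L0 d G) < \<infinity>"
  shows "LP_ae (\<lambda>\<eta>. \<forall>\<xi>\<subseteq>\<eta>. integrable lborel (birth_integrand b G \<eta> \<xi>))"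
proof (rule LP_ae_of_finite[OF cfg_meas_sum_Pow[OF cfg_meas2_birth_term[OF b G]]])
  have "LP_nn (\<lambda>\<eta>. \<Sum>\<xi>\<in>Pow \<eta>. birth_term C b G \<xi> (\<eta> - \<xi>)) \<le> ennreal (a2 / C) * normC C (L0 d G)"
    by (rule birth_part_bound[OF d_nonneg d b C a2 hyp_b G])
  also have "\<dots> < \<infinity>" using L0G by (simp add: ennreal_mult_less_top)
  finally show "LP_nn (\<lambda>\<eta>. \<Sum>\<xi>\<in>Pow \<eta>. birth_term C b G \<xi> (\<eta> - \<xi>)) < \<infinity>" .
next
  fix \<eta> :: "'a set" assume \<eta>: "finite \<eta>" and "\<not> (\<forall>\<xi>\<subseteq>\<eta>. integrable lborel (birth_integrand b G \<eta> \<xi>))"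
  then obtain \<xi> where \<xi>: "\<xi> \<subseteq> \<eta>" and "\<not> integrable lborel (birth_integrand b G \<eta> \<xi>)"
    by blast
  then have "birth_term C b G \<xi> (\<eta> - \<xi>) = \<infinity>"
    by (intro birth_term_eq_top[OF b G C \<eta>])
  moreover have "birth_term C b G \<xi> (\<eta> - \<xi>) \<le> (\<Sum>\<xi>\<in>Pow \<eta>. birth_term C b G \<xi> (\<eta> - \<xi>))"
    using \<xi> \<eta> by (intro member_le_sum) auto
  ultimately show "(\<Sum>\<xi>\<in>Pow \<eta>. birth_term C b G \<xi> (\<eta> - \<xi>)) = \<infinity>" by (simp add: top_unique)
qed

text \<open>For Re z > 0 the multiplication operator D (z + D)^{-1} is a contraction
  on L_C; this turns the relative bound into the resolvent bound.\<close>
lemma normC_D_resolvent_le: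
  fixes d :: "'a::euclidean_space \<Rightarrow> 'a set \<Rightarrow> real"
  assumes d_nonneg: "\<And>x \<eta>. 0 \<le> d x \<eta>" and z: "0 < Re z" and C: "C > 0"
  shows "normC C (L0 d (\<lambda>\<eta>. H \<eta> / (z + of_real (Dtot d \<eta>)))) \<le> normC C H"
  unfolding normC_def
proof (rule LP_mono)
  fix \<eta> :: "'a set"
  have D: "0 \<le> Dtot d \<eta>" using d_nonneg by (rule Dtot_nonneg)
  have "Dtot d \<eta> \<le> Re (z + of_real (Dtot d \<eta>))" using z by simp
  also have "\<dots> \<le> cmod (z + of_real (Dtot d \<eta>))" by (rule complex_Re_le_cmod)
  finally have ratio: "Dtot d \<eta> / cmod (z + of_real (Dtot d \<eta>)) \<le> 1"
    using z D by (simp add: divide_le_eq_1)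
  have "cmod (L0 d (\<lambda>\<eta>. H \<eta> / (z + of_real (Dtot d \<eta>))) \<eta>)
      = Dtot d \<eta> / cmod (z + of_real (Dtot d \<eta>)) * cmod (H \<eta>)"
    by (simp add: norm_L0[OF d_nonneg] norm_divide)
  also have "\<dots> \<le> cmod (H \<eta>)"
    using mult_right_mono[OF ratio, of "cmod (H \<eta>)"] by simp
  finally show "ennreal (cmod (L0 d (\<lambda>\<eta>. H \<eta> / (z + of_real (Dtot d \<eta>))) \<eta>) * C ^ card \<eta>)
      \<le> ennreal (cmod (H \<eta>) * C ^ card \<eta>)"
    using C by (intro ennreal_leI mult_right_mono) simp_all
qed

text \<open>The resolvent (z - L_0)^{-1} H = H / (z + D) preserves measurability.\<close>
lemma LP_meas_resolvent:
  assumes d: "rate_meas d" and H: "LP_meas H"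
  shows "LP_meas (\<lambda>\<eta>. H \<eta> / (z + of_real (Dtot d \<eta>)))"
proof -
  have "cfg_meas (\<lambda>\<eta>. inverse (z + of_real (Dtot d \<eta>)))"
    by (rule cfg_meas_comp[OF cfg_meas_Dtot[OF d]]) measurable
  from cfg_meas_mult[OF H[unfolded LP_meas_iff_cfg_meas] this] show ?thesis
    by (simp add: LP_meas_iff_cfg_meas divide_inverse)
qed

lemma resolvent_bound:
  fixes d b :: "'a::euclidean_space \<Rightarrow> 'a set \<Rightarrow> real"
  assumes rel: "\<And>G. LP_meas G \<Longrightarrow> normC C (L1 d b G) \<le> K * normC C (L0 d G)"
    and d_nonneg: "\<And>x \<eta>. 0 \<le> d x \<eta>" and d: "rate_meas d"
    and z: "0 < Re z" and C: "C > 0" and H: "H \<in> LC C"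
  shows "normC C (L1 d b (\<lambda>\<eta>. H \<eta> / (z + of_real (Dtot d \<eta>)))) \<le> K * normC C H"
proof -
  have "LP_meas H" using H by (simp add: LC_def)
  then have "normC C (L1 d b (\<lambda>\<eta>. H \<eta> / (z + of_real (Dtot d \<eta>))))
      \<le> K * normC C (L0 d (\<lambda>\<eta>. H \<eta> / (z + of_real (Dtot d \<eta>))))"
    by (intro rel LP_meas_resolvent d)
  also have "\<dots> \<le> K * normC C H"
    by (rule mult_left_mono[OF normC_D_resolvent_le[where d=d, OF d_nonneg z C]]) simp
  finally show ?thesis .
qed

lemma DomD_L0_finite:
  assumes "G \<in> DomD C d"
  shows "LP_meas G" and "normC C (L0 d G) < \<infinity>"
  using assms by (simp_all add: DomD_def LC_def normC_def L0_def)

theorem lemma2: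
  fixes d b :: "'a::euclidean_space \<Rightarrow> 'a set \<Rightarrow> real"
    and C a1 a2 :: real
  assumes d_nonneg: "\<And>x \<eta>. 0 \<le> d x \<eta>"
    and b_nonneg: "\<And>x \<eta>. 0 \<le> b x \<eta>"
    and d_meas: "rate_meas d"
    and b_meas: "rate_meas b"
    and C_gt: "C > 1"
    and a1_ge: "a1 \<ge> 1"
    and a2_pos: "a2 > 0"
    and hyp_d: "\<And>\<xi>. finite \<xi> \<Longrightarrow>
      (\<Sum>x\<in>\<xi>. LP_nn (\<lambda>\<eta>. ennreal (\<bar>Kinv (\<lambda>\<zeta>. d x (\<zeta> \<union> (\<xi> - {x}))) \<eta>\<bar> * C ^ card \<eta>)))
        \<le> ennreal (a1 * Dtot d \<xi>)"
    and hyp_b: "\<And>\<xi>. finite \<xi> \<Longrightarrow>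
      (\<Sum>x\<in>\<xi>. LP_nn (\<lambda>\<eta>. ennreal (\<bar>Kinv (\<lambda>\<zeta>. b x (\<zeta> \<union> (\<xi> - {x}))) \<eta>\<bar> * C ^ card \<eta>)))
        \<le> ennreal (a2 * Dtot d \<xi>)"
  shows "(\<forall>G\<in>DomD C d.
            LP_ae (\<lambda>\<eta>. \<forall>\<xi>\<subseteq>\<eta>. integrable lborel (birth_integrand b G \<eta> \<xi>))
            \<and> L1 d b G \<in> LC C)
       \<and> (\<forall>z::complex. Re z > 0 \<longrightarrow> (\<forall>H\<in>LC C.
            normC C (L1 d b (\<lambda>\<eta>. H \<eta> / (z + of_real (Dtot d \<eta>))))
              \<le> ennreal (a1 - 1 + a2 / C) * normC C H))
       \<and> (\<forall>G\<in>DomD C d.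
            normC C (L1 d b G) \<le> ennreal (a1 - 1 + a2 / C) * normC C (L0 d G))"
proof -
  have C: "C > 0" using C_gt by simp
  note hyp_d' = hyp_d[folded rate_norm_def] and hyp_b' = hyp_b[folded rate_norm_def]
  have bound: "normC C (L1 d b G) \<le> ennreal (a1 - 1 + a2 / C) * normC C (L0 d G)" if "LP_meas G" for G
    using L1_norm_bound[OF d_nonneg d_meas b_meas C a1_ge a2_pos hyp_d' hyp_b'] that
    by (simp add: LP_meas_iff_cfg_meas)
  have "LP_ae (\<lambda>\<eta>. \<forall>\<xi>\<subseteq>\<eta>. integrable lborel (birth_integrand b G \<eta> \<xi>))" if "G \<in> DomD C d" for G
    using birth_integrable_ae[OF d_nonneg d_meas b_meas C a2_pos hyp_b'] DomD_L0_finite[OF that]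
    by (simp add: LP_meas_iff_cfg_meas)
  moreover have "L1 d b G \<in> LC C" if "G \<in> DomD C d" for G
    using bound[OF DomD_L0_finite(1)[OF that]] DomD_L0_finite[OF that] LP_meas_L1[OF d_meas b_meas]
    by (auto simp: LC_def ennreal_mult_less_top intro: le_less_trans)
  moreover note resolvent_bound[OF bound d_nonneg d_meas _ C]
  ultimately show ?thesis using bound DomD_L0_finite(1) by blast
qed

end
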